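(* Let $G$ be a finite group and $T$ a $G$-Tambara functor. The Nakaoka spectrum $\operatorname{Spec}_{\mathbf{Nak}}(T)$ is a spectral space.
   Context: All rings are commutative with unit. A $G$-Tambara functor $T$ consists of commutative rings $T(G/H)$ for subgroups $H\le G$ with restriction ring maps, additive transfer maps, multiplicative norm maps and conjugation isomorphisms satisfying the standard Tambara axioms (Hill–Mazur). A Tambara ideal is a family of ring ideals $I(G/H)\subseteq T(G/H)$ closed under restriction, transfer, norm and conjugation; it is proper if $1\notin I(G/G)$. The product $IJ$ of Tambara ideals is the Tambara ideal generated by the levelwise products $I(G/H)J(G/H)$. A proper Tambara ideal $P$ is prime if for all Tambara ideals $I,J$, $IJ\subseteq P$ implies $I\subseteq P$ or $J\subseteq P$. $\operatorname{Spec}_{\mathbf{Nak}}(T)$ is the set of prime Tambara ideals, topologized by taking the sets $V_H(x)=\{P\mid x\in P(G/H)\}$ ($H\le G$, $x\in T(G/H)$) as a subbasis of closed sets. A spectral space (Hochster) is a quasi-compact sober space whose quasi-compact opens are closed under finite intersections and form a basis. *)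

theory Defs
  imports "HOL-Analysis.Abstract_Topology" "HOL-Algebra.Ideal_Product" "HOL-Algebra.Coset"
          "HOL-Library.FuncSet"
begin

definition conjg :: "('g, 'b) monoid_scheme \<Rightarrow> 'g \<Rightarrow> 'g set \<Rightarrow> 'g set" where
  "conjg G g K = {g \<otimes>\<^bsub>G\<^esub> k \<otimes>\<^bsub>G\<^esub> inv\<^bsub>G\<^esub> g | k. k \<in> K}"

definition cosets_in :: "('g, 'b) monoid_scheme \<Rightarrow> 'g set \<Rightarrow> 'g set \<Rightarrow> 'g set set" where
  "cosets_in G H K = {h <#\<^bsub>G\<^esub> K | h. h \<in> H}"

definition dcosets :: "('g, 'b) monoid_scheme \<Rightarrow> 'g set \<Rightarrow> 'g set \<Rightarrow> 'g set \<Rightarrow> 'g set set" where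
  "dcosets G H L K = {{l \<otimes>\<^bsub>G\<^esub> h \<otimes>\<^bsub>G\<^esub> k | l k. l \<in> L \<and> k \<in> K} | h. h \<in> H}"

definition dcrep :: "('g, 'b) monoid_scheme \<Rightarrow> 'g set \<Rightarrow> 'g set \<Rightarrow> 'g set \<Rightarrow> 'g set \<Rightarrow> 'g" where
  "dcrep G H L K D = (SOME h. h \<in> H \<and> D = {l \<otimes>\<^bsub>G\<^esub> h \<otimes>\<^bsub>G\<^esub> k | l k. l \<in> L \<and> k \<in> K})"

definition bool_fns :: "('g, 'b) monoid_scheme \<Rightarrow> 'g set \<Rightarrow> 'g set \<Rightarrow> ('g set \<Rightarrow> bool) set" where
  "bool_fns G H K = (cosets_in G H K \<rightarrow>\<^sub>E (UNIV :: bool set))"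

definition bool_act :: "('g, 'b) monoid_scheme \<Rightarrow> 'g set \<Rightarrow> 'g set \<Rightarrow> 'g \<Rightarrow> ('g set \<Rightarrow> bool) \<Rightarrow> ('g set \<Rightarrow> bool)" where
  "bool_act G H K h s = (\<lambda>x\<in>cosets_in G H K. s (inv\<^bsub>G\<^esub> h <#\<^bsub>G\<^esub> x))"

definition bool_orbits :: "('g, 'b) monoid_scheme \<Rightarrow> 'g set \<Rightarrow> 'g set \<Rightarrow> ('g set \<Rightarrow> bool) set set" where
  "bool_orbits G H K = {{bool_act G H K h s | h. h \<in> H} | s. s \<in> bool_fns G H K}"

definition bool_stab :: "('g, 'b) monoid_scheme \<Rightarrow> 'g set \<Rightarrow> 'g set \<Rightarrow> ('g set \<Rightarrow> bool) \<Rightarrow> 'g set" where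
  "bool_stab G H K s = {h \<in> H. \<forall>x \<in> cosets_in G H K. s (h <#\<^bsub>G\<^esub> x) = s x}"

text \<open>Sections of H/L -> H/K (L <= K <= H), i.e. the exponential object for the
  composite H/L -> H/K -> H/H; H acts by (h.s)(x) = h s(h^-1 x).\<close>
definition sections :: "('g, 'b) monoid_scheme \<Rightarrow> 'g set \<Rightarrow> 'g set \<Rightarrow> 'g set \<Rightarrow> ('g set \<Rightarrow> 'g set) set" where
  "sections G H K L = {s \<in> cosets_in G H K \<rightarrow>\<^sub>E cosets_in G H L. \<forall>x \<in> cosets_in G H K. s x \<subseteq> x}"

definition sec_act :: "('g, 'b) monoid_scheme \<Rightarrow> 'g set \<Rightarrow> 'g set \<Rightarrow> 'g \<Rightarrow> ('g set \<Rightarrow> 'g set) \<Rightarrow> ('g set \<Rightarrow> 'g set)" where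
  "sec_act G H K h s = (\<lambda>x\<in>cosets_in G H K. h <#\<^bsub>G\<^esub> s (inv\<^bsub>G\<^esub> h <#\<^bsub>G\<^esub> x))"

definition sec_orbits :: "('g, 'b) monoid_scheme \<Rightarrow> 'g set \<Rightarrow> 'g set \<Rightarrow> 'g set \<Rightarrow> ('g set \<Rightarrow> 'g set) set set" where
  "sec_orbits G H K L = {{sec_act G H K h s | h. h \<in> H} | s. s \<in> sections G H K L}"

definition sec_stab :: "('g, 'b) monoid_scheme \<Rightarrow> 'g set \<Rightarrow> 'g set \<Rightarrow> ('g set \<Rightarrow> 'g set) \<Rightarrow> 'g set" where
  "sec_stab G H K s = {h \<in> H. \<forall>x \<in> cosets_in G H K. h <#\<^bsub>G\<^esub> s x = s (h <#\<^bsub>G\<^esub> x)}"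

section \<open>Tambara functors (orbit-level description, Hill--Mazur)\<close>

text \<open>Level T(G/H) is indexed by the subgroup H.
  res K H : T(G/H) -> T(G/K),  tr K H, nm K H : T(G/K) -> T(G/H)  (K <= H),
  cj g K : T(G/K) -> T(G/gKg^-1).\<close>
record ('g, 'r) tambara_data =
  lev :: "'g set \<Rightarrow> 'r ring"
  res :: "'g set \<Rightarrow> 'g set \<Rightarrow> 'r \<Rightarrow> 'r"
  tr  :: "'g set \<Rightarrow> 'g set \<Rightarrow> 'r \<Rightarrow> 'r"
  nm  :: "'g set \<Rightarrow> 'g set \<Rightarrow> 'r \<Rightarrow> 'r"
  cj  :: "'g \<Rightarrow> 'g set \<Rightarrow> 'r \<Rightarrow> 'r"

definition tambara_functor :: "('g, 'b) monoid_scheme \<Rightarrow> ('g, 'r) tambara_data \<Rightarrow> bool" where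
  "tambara_functor G T \<longleftrightarrow>
    \<comment> \<open>levels are commutative rings\<close>
    (\<forall>H. subgroup H G \<longrightarrow> cring (lev T H)) \<and>
    \<comment> \<open>restriction and conjugation are ring homomorphisms\<close>
    (\<forall>H K. subgroup H G \<longrightarrow> subgroup K G \<longrightarrow> K \<subseteq> H \<longrightarrow>
        res T K H \<in> ring_hom (lev T H) (lev T K)) \<and>
    (\<forall>g K. g \<in> carrier G \<longrightarrow> subgroup K G \<longrightarrow>
        cj T g K \<in> ring_hom (lev T K) (lev T (conjg G g K))) \<and>
    \<comment> \<open>transfers are additive, norms multiplicative (and unital, preserve 0)\<close>
    (\<forall>H K. subgroup H G \<longrightarrow> subgroup K G \<longrightarrow> K \<subseteq> H \<longrightarrow>
        (\<forall>a \<in> carrier (lev T K). tr T K H a \<in> carrier (lev T H) \<and> nm T K H a \<in> carrier (lev T H)) \<and>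
        (\<forall>a \<in> carrier (lev T K). \<forall>b \<in> carrier (lev T K).
            tr T K H (a \<oplus>\<^bsub>lev T K\<^esub> b) = tr T K H a \<oplus>\<^bsub>lev T H\<^esub> tr T K H b \<and>
            nm T K H (a \<otimes>\<^bsub>lev T K\<^esub> b) = nm T K H a \<otimes>\<^bsub>lev T H\<^esub> nm T K H b) \<and>
        nm T K H \<one>\<^bsub>lev T K\<^esub> = \<one>\<^bsub>lev T H\<^esub> \<and>
        nm T K H \<zero>\<^bsub>lev T K\<^esub> = \<zero>\<^bsub>lev T H\<^esub>) \<and>
    \<comment> \<open>identities and transitivity\<close>
    (\<forall>H. subgroup H G \<longrightarrow> (\<forall>a \<in> carrier (lev T H).
        res T H H a = a \<and> tr T H H a = a \<and> nm T H H a = a)) \<and>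
    (\<forall>H K L. subgroup H G \<longrightarrow> subgroup K G \<longrightarrow> subgroup L G \<longrightarrow> L \<subseteq> K \<longrightarrow> K \<subseteq> H \<longrightarrow>
        (\<forall>a \<in> carrier (lev T H). res T L K (res T K H a) = res T L H a) \<and>
        (\<forall>a \<in> carrier (lev T L). tr T K H (tr T L K a) = tr T L H a \<and>
                                   nm T K H (nm T L K a) = nm T L H a)) \<and>
    \<comment> \<open>conjugations: action of G, trivial action of H on T(G/H)\<close>
    (\<forall>H. subgroup H G \<longrightarrow> (\<forall>h \<in> H. \<forall>a \<in> carrier (lev T H). cj T h H a = a)) \<and>
    (\<forall>g g' K. g \<in> carrier G \<longrightarrow> g' \<in> carrier G \<longrightarrow> subgroup K G \<longrightarrow>
        (\<forall>a \<in> carrier (lev T K).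
           cj T g (conjg G g' K) (cj T g' K a) = cj T (g \<otimes>\<^bsub>G\<^esub> g') K a)) \<and>
    \<comment> \<open>conjugations commute with restriction, transfer and norm\<close>
    (\<forall>g H K. g \<in> carrier G \<longrightarrow> subgroup H G \<longrightarrow> subgroup K G \<longrightarrow> K \<subseteq> H \<longrightarrow>
        (\<forall>a \<in> carrier (lev T H).
           cj T g K (res T K H a) = res T (conjg G g K) (conjg G g H) (cj T g H a)) \<and>
        (\<forall>a \<in> carrier (lev T K).
           cj T g H (tr T K H a) = tr T (conjg G g K) (conjg G g H) (cj T g K a) \<and>
           cj T g H (nm T K H a) = nm T (conjg G g K) (conjg G g H) (cj T g K a))) \<and>
    \<comment> \<open>Frobenius reciprocity\<close>
    (\<forall>H K. subgroup H G \<longrightarrow> subgroup K G \<longrightarrow> K \<subseteq> H \<longrightarrow>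
        (\<forall>a \<in> carrier (lev T K). \<forall>b \<in> carrier (lev T H).
           tr T K H a \<otimes>\<^bsub>lev T H\<^esub> b = tr T K H (a \<otimes>\<^bsub>lev T K\<^esub> res T K H b))) \<and>
    \<comment> \<open>additive and multiplicative double coset formulas\<close>
    (\<forall>H K L. subgroup H G \<longrightarrow> subgroup K G \<longrightarrow> subgroup L G \<longrightarrow> K \<subseteq> H \<longrightarrow> L \<subseteq> H \<longrightarrow>
        (\<forall>a \<in> carrier (lev T K).
           res T L H (tr T K H a) =
             finsum (lev T L)
               (\<lambda>D. let h = dcrep G H L K D; K' = conjg G (inv\<^bsub>G\<^esub> h) L \<inter> K in
                      tr T (L \<inter> conjg G h K) L (cj T h K' (res T K' K a)))
               (dcosets G H L K) \<and>
           res T L H (nm T K H a) =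
             finprod (lev T L)
               (\<lambda>D. let h = dcrep G H L K D; K' = conjg G (inv\<^bsub>G\<^esub> h) L \<inter> K in
                      nm T (L \<inter> conjg G h K) L (cj T h K' (res T K' K a)))
               (dcosets G H L K))) \<and>
    \<comment> \<open>Tambara reciprocity: norm of a sum\<close>
    (\<forall>H K. subgroup H G \<longrightarrow> subgroup K G \<longrightarrow> K \<subseteq> H \<longrightarrow>
        (\<forall>a \<in> carrier (lev T K). \<forall>b \<in> carrier (lev T K).
           nm T K H (a \<oplus>\<^bsub>lev T K\<^esub> b) =
             finsum (lev T H)
               (\<lambda>Ob. let s = (SOME s. s \<in> Ob); M = bool_stab G H K s in
                  tr T M H
                    (finprod (lev T M)
                       (\<lambda>D. let h = dcrep G H M K D; K' = conjg G (inv\<^bsub>G\<^esub> h) M \<inter> K in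
                          nm T (M \<inter> conjg G h K) M
                            (cj T h K' (res T K' K (if s (h <#\<^bsub>G\<^esub> K) then a else b))))
                       (dcosets G H M K)))
               (bool_orbits G H K))) \<and>
    \<comment> \<open>Tambara reciprocity: norm of a transfer\<close>
    (\<forall>H K L. subgroup H G \<longrightarrow> subgroup K G \<longrightarrow> subgroup L G \<longrightarrow> L \<subseteq> K \<longrightarrow> K \<subseteq> H \<longrightarrow>
        (\<forall>a \<in> carrier (lev T L).
           nm T K H (tr T L K a) =
             finsum (lev T H)
               (\<lambda>Ob. let s = (SOME s. s \<in> Ob); M = sec_stab G H K s in
                  tr T M H
                    (finprod (lev T M)
                       (\<lambda>D. let h = dcrep G H M K D;
                               h' = (SOME h'. h' \<in> H \<and> s (h <#\<^bsub>G\<^esub> K) = h' <#\<^bsub>G\<^esub> L) in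
                          nm T (M \<inter> conjg G h K) M
                            (res T (M \<inter> conjg G h K) (conjg G h' L) (cj T h' L a)))
                       (dcosets G H M K)))
               (sec_orbits G H K L)))"

text \<open>A Tambara ideal, normalised to be empty at non-subgroups.\<close>
definition tambara_ideal :: "('g, 'b) monoid_scheme \<Rightarrow> ('g, 'r) tambara_data \<Rightarrow> ('g set \<Rightarrow> 'r set) \<Rightarrow> bool" where
  "tambara_ideal G T I \<longleftrightarrow>
    (\<forall>H. \<not> subgroup H G \<longrightarrow> I H = {}) \<and>
    (\<forall>H. subgroup H G \<longrightarrow> ideal (I H) (lev T H)) \<and>
    (\<forall>H K. subgroup H G \<longrightarrow> subgroup K G \<longrightarrow> K \<subseteq> H \<longrightarrow>
        (\<forall>a \<in> I H. res T K H a \<in> I K) \<and>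
        (\<forall>a \<in> I K. tr T K H a \<in> I H \<and> nm T K H a \<in> I H)) \<and>
    (\<forall>g K. g \<in> carrier G \<longrightarrow> subgroup K G \<longrightarrow> (\<forall>a \<in> I K. cj T g K a \<in> I (conjg G g K)))"

definition tambara_gen :: "('g, 'b) monoid_scheme \<Rightarrow> ('g, 'r) tambara_data \<Rightarrow> ('g set \<Rightarrow> 'r set) \<Rightarrow> ('g set \<Rightarrow> 'r set)" where
  "tambara_gen G T S = (\<lambda>H. if subgroup H G
      then \<Inter> {I H | I. tambara_ideal G T I \<and> (\<forall>K. S K \<subseteq> I K)} else {})"

definition tambara_prod :: "('g, 'b) monoid_scheme \<Rightarrow> ('g, 'r) tambara_data \<Rightarrow> ('g set \<Rightarrow> 'r set) \<Rightarrow> ('g set \<Rightarrow> 'r set) \<Rightarrow> ('g set \<Rightarrow> 'r set)" where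
  "tambara_prod G T I J = tambara_gen G T (\<lambda>H. if subgroup H G then ideal_prod (lev T H) (I H) (J H) else {})"

definition tambara_sub :: "('g set \<Rightarrow> 'r set) \<Rightarrow> ('g set \<Rightarrow> 'r set) \<Rightarrow> bool" where
  "tambara_sub I J \<longleftrightarrow> (\<forall>H. I H \<subseteq> J H)"

definition tambara_prime :: "('g, 'b) monoid_scheme \<Rightarrow> ('g, 'r) tambara_data \<Rightarrow> ('g set \<Rightarrow> 'r set) \<Rightarrow> bool" where
  "tambara_prime G T P \<longleftrightarrow>
    tambara_ideal G T P \<and> \<one>\<^bsub>lev T (carrier G)\<^esub> \<notin> P (carrier G) \<and>
    (\<forall>I J. tambara_ideal G T I \<longrightarrow> tambara_ideal G T J \<longrightarrow>
        tambara_sub (tambara_prod G T I J) P \<longrightarrow> tambara_sub I P \<or> tambara_sub J P)"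

definition nak_spec :: "('g, 'b) monoid_scheme \<Rightarrow> ('g, 'r) tambara_data \<Rightarrow> ('g set \<Rightarrow> 'r set) set" where
  "nak_spec G T = {P. tambara_prime G T P}"

definition nak_V :: "('g, 'b) monoid_scheme \<Rightarrow> ('g, 'r) tambara_data \<Rightarrow> 'g set \<Rightarrow> 'r \<Rightarrow> ('g set \<Rightarrow> 'r set) set" where
  "nak_V G T H x = {P \<in> nak_spec G T. x \<in> P H}"

text \<open>Topology whose closed subbasis is the V_H(x): open subbasis = complements.\<close>
definition nak_topology :: "('g, 'b) monoid_scheme \<Rightarrow> ('g, 'r) tambara_data \<Rightarrow> ('g set \<Rightarrow> 'r set) topology" where
  "nak_topology G T = topology_generated_by
     (insert (nak_spec G T)
       {nak_spec G T - nak_V G T H x | H x. subgroup H G \<and> x \<in> carrier (lev T H)})"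

definition irreducible_closed :: "'a topology \<Rightarrow> 'a set \<Rightarrow> bool" where
  "irreducible_closed X Z \<longleftrightarrow> closedin X Z \<and> Z \<noteq> {} \<and>
     (\<forall>A B. closedin X A \<longrightarrow> closedin X B \<longrightarrow> Z \<subseteq> A \<union> B \<longrightarrow> Z \<subseteq> A \<or> Z \<subseteq> B)"

definition sober_space :: "'a topology \<Rightarrow> bool" where
  "sober_space X \<longleftrightarrow> (\<forall>Z. irreducible_closed X Z \<longrightarrow>
     (\<exists>!x. x \<in> topspace X \<and> X closure_of {x} = Z))"

definition spectral_space :: "'a topology \<Rightarrow> bool" where
  "spectral_space X \<longleftrightarrow>
     compact_space X \<and> sober_space X \<and>
     (\<forall>U V. openin X U \<longrightarrow> compactin X U \<longrightarrow> openin X V \<longrightarrow> compactin X V \<longrightarrow>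
        compactin X (U \<inter> V)) \<and>
     (\<forall>W x. openin X W \<longrightarrow> x \<in> W \<longrightarrow>
        (\<exists>U. openin X U \<and> compactin X U \<and> x \<in> U \<and> U \<subseteq> W))"

end

theory Submission
  imports Defs "HOL-Analysis.Function_Topology"
begin

text \<open>
  The basic open sets, the intersections of finitely many complements of the subbasic closed sets
  \<open>V\<^sub>H(x)\<close>, form a basis closed under finite intersections, so it suffices to show that they
  are quasi-compact and that the space is sober. Quasi-compactness follows from Alexander's subbase
  theorem and a Zorn argument: a maximal set \<open>S\<close> of pairs \<open>(H, x)\<close>, each finite subset of which
  lies in (the graph of) some prime of a given basic open set, is itself such a prime. Closure under
  the Tambara operations is immediate from maximality. Primality rests on the fact that the product
  of the Tambara ideals generated by single elements \<open>a\<close> and \<open>b\<close> is generated by finitely many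
  elements, namely the products of norms of conjugated restrictions of \<open>a\<close> with those of \<open>b\<close>.
  This comes from Nakaoka's description of the Tambara ideal generated by \<open>a\<close> as the sums of
  transfers of multiples of such norms, whose closure under norms is shown with Tambara reciprocity
  by induction on the order of the subgroup. For sobriety, the generic point of an irreducible
  closed set is the levelwise intersection of its points.
\<close>

context group
begin

lemma inv_mult_cancel_left: "g \<in> carrier G \<Longrightarrow> k \<in> carrier G \<Longrightarrow> inv g \<otimes> (g \<otimes> k) = k"
  by (simp add: m_assoc[symmetric])

lemma mult_inv_cancel_left: "g \<in> carrier G \<Longrightarrow> k \<in> carrier G \<Longrightarrow> g \<otimes> (inv g \<otimes> k) = k"
  by (simp add: m_assoc[symmetric])

lemma conjg_closed: "g \<in> carrier G \<Longrightarrow> K \<subseteq> carrier G \<Longrightarrow> conjg G g K \<subseteq> carrier G"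
  unfolding conjg_def by auto

lemma conjg_mem_iff:
  assumes g: "g \<in> carrier G" and K: "K \<subseteq> carrier G" and x: "x \<in> carrier G"
  shows "x \<in> conjg G g K \<longleftrightarrow> inv g \<otimes> x \<otimes> g \<in> K"
proof
  assume "x \<in> conjg G g K"
  then obtain k where "k \<in> K" "x = g \<otimes> k \<otimes> inv g" unfolding conjg_def by blast
  moreover have "k \<in> carrier G" using \<open>k \<in> K\<close> K by blast
  ultimately show "inv g \<otimes> x \<otimes> g \<in> K" using g by (simp add: m_assoc inv_mult_cancel_left)
next
  assume "inv g \<otimes> x \<otimes> g \<in> K"
  moreover have "x = g \<otimes> (inv g \<otimes> x \<otimes> g) \<otimes> inv g" using g x by (simp add: m_assoc mult_inv_cancel_left)
  ultimately show "x \<in> conjg G g K" unfolding conjg_def by blast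
qed

lemma subgroup_conjg:
  assumes g: "g \<in> carrier G" and K: "subgroup K G"
  shows "subgroup (conjg G g K) G"
proof (rule subgroupI)
  have Kc: "K \<subseteq> carrier G" using K by (rule subgroup.subset)
  show "conjg G g K \<subseteq> carrier G" using conjg_closed[OF g Kc] .
  show "conjg G g K \<noteq> {}" using subgroup.one_closed[OF K] unfolding conjg_def by blast
  fix x y assume "x \<in> conjg G g K" "y \<in> conjg G g K"
  then obtain k l where k: "k \<in> K" "x = g \<otimes> k \<otimes> inv g" and l: "l \<in> K" "y = g \<otimes> l \<otimes> inv g"
    unfolding conjg_def by blast
  have kl: "k \<in> carrier G" "l \<in> carrier G" using k l Kc by auto
  have "inv x = g \<otimes> inv k \<otimes> inv g" using k(2) g kl by (simp add: inv_mult_group m_assoc)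
  then show "inv x \<in> conjg G g K"
    unfolding conjg_def using subgroup.m_inv_closed[OF K k(1)] by blast
  have "x \<otimes> y = g \<otimes> (k \<otimes> l) \<otimes> inv g" using k(2) l(2) g kl by (simp add: m_assoc inv_mult_cancel_left)
  then show "x \<otimes> y \<in> conjg G g K"
    unfolding conjg_def using subgroup.m_closed[OF K k(1) l(1)] by blast
qed

lemma conjg_conjg:
  assumes g: "g \<in> carrier G" and g': "g' \<in> carrier G" and K: "K \<subseteq> carrier G"
  shows "conjg G g (conjg G g' K) = conjg G (g \<otimes> g') K"
proof -
  have e: "g \<otimes> g' \<otimes> k \<otimes> inv (g \<otimes> g') = g \<otimes> (g' \<otimes> k \<otimes> inv g') \<otimes> inv g" if "k \<in> K" for k
    using that K g g' by (auto simp: inv_mult_group m_assoc)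
  show ?thesis
  proof (intro equalityI subsetI)
    fix x assume "x \<in> conjg G (g \<otimes> g') K"
    then obtain k where "k \<in> K" "x = g \<otimes> (g' \<otimes> k \<otimes> inv g') \<otimes> inv g"
      unfolding conjg_def using e by blast
    then show "x \<in> conjg G g (conjg G g' K)" unfolding conjg_def by blast
  next
    fix x assume "x \<in> conjg G g (conjg G g' K)"
    then obtain k where k: "k \<in> K" "x = g \<otimes> (g' \<otimes> k \<otimes> inv g') \<otimes> inv g"
      unfolding conjg_def by blast
    then have "x = g \<otimes> g' \<otimes> k \<otimes> inv (g \<otimes> g')" using e by metis
    then show "x \<in> conjg G (g \<otimes> g') K" unfolding conjg_def using k(1) by blast
  qed
qed

lemma conjg_one: "K \<subseteq> carrier G \<Longrightarrow> conjg G \<one> K = K"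
  unfolding conjg_def by (force simp: subsetD)

lemma conjg_inv_conjg: "g \<in> carrier G \<Longrightarrow> K \<subseteq> carrier G \<Longrightarrow> conjg G (inv g) (conjg G g K) = K"
  by (simp add: conjg_conjg conjg_one)

lemma conjg_conjg_inv: "g \<in> carrier G \<Longrightarrow> K \<subseteq> carrier G \<Longrightarrow> conjg G g (conjg G (inv g) K) = K"
  by (simp add: conjg_conjg conjg_one)

lemma conjg_mono: "A \<subseteq> B \<Longrightarrow> conjg G g A \<subseteq> conjg G g B"
  unfolding conjg_def by blast

lemma conjg_Int:
  assumes g: "g \<in> carrier G" and A: "A \<subseteq> carrier G" and B: "B \<subseteq> carrier G"
  shows "conjg G g (A \<inter> B) = conjg G g A \<inter> conjg G g B"
proof (rule equalityI)
  show "conjg G g A \<inter> conjg G g B \<subseteq> conjg G g (A \<inter> B)"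
  proof
    fix x assume x: "x \<in> conjg G g A \<inter> conjg G g B"
    then have "x \<in> carrier G" using conjg_closed[OF g A] by blast
    with x show "x \<in> conjg G g (A \<inter> B)"
      using conjg_mem_iff[OF g] A B by (simp add: le_infI1)
  qed
qed (simp add: conjg_mono)

lemma conjg_subgroup_self:
  assumes H: "subgroup H G" and h: "h \<in> H"
  shows "conjg G h H = H"
proof
  have Hc: "H \<subseteq> carrier G" and hc: "h \<in> carrier G" using H h subgroup.subset by auto
  show "conjg G h H \<subseteq> H" unfolding conjg_def
    using H h by (auto intro!: subgroup.m_closed subgroup.m_inv_closed)
  show "H \<subseteq> conjg G h H"
  proof
    fix x assume x: "x \<in> H"
    then have "inv h \<otimes> x \<otimes> h \<in> H" using H h by (auto intro!: subgroup.m_closed subgroup.m_inv_closed)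
    then show "x \<in> conjg G h H" using conjg_mem_iff[OF hc Hc] x Hc by blast
  qed
qed

lemma conjg_conjg_inv_Int:
  "h \<in> carrier G \<Longrightarrow> L \<subseteq> carrier G \<Longrightarrow> K \<subseteq> carrier G \<Longrightarrow>
    conjg G h (conjg G (inv h) L \<inter> K) = L \<inter> conjg G h K"
  by (simp add: conjg_Int conjg_closed conjg_conjg_inv)

lemma finite_dcosets: "finite H \<Longrightarrow> finite (dcosets G H L K)"
  unfolding dcosets_def by (simp add: setcompr_eq_image)

lemma dcosets_nonempty: "H \<noteq> {} \<Longrightarrow> dcosets G H L K \<noteq> {}"
  unfolding dcosets_def by blast

lemma dcrep_mem: "D \<in> dcosets G H L K \<Longrightarrow> dcrep G H L K D \<in> H"
  unfolding dcosets_def dcrep_def by (rule someI2_ex) auto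

lemma dcosets_self:
  assumes H: "subgroup H G" and K: "subgroup K G" and KH: "K \<subseteq> H"
  shows "dcosets G H H K = {H}"
proof -
  have "{l \<otimes> h \<otimes> k | l k. l \<in> H \<and> k \<in> K} = H" if h: "h \<in> H" for h
  proof
    show "{l \<otimes> h \<otimes> k | l k. l \<in> H \<and> k \<in> K} \<subseteq> H"
      using H h KH by (auto intro!: subgroup.m_closed)
    show "H \<subseteq> {l \<otimes> h \<otimes> k | l k. l \<in> H \<and> k \<in> K}"
    proof
      fix x assume x: "x \<in> H"
      have "x \<in> carrier G" "h \<in> carrier G" using x h subgroup.subset[OF H] by auto
      then have "x = (x \<otimes> inv h) \<otimes> h \<otimes> \<one>" by (simp add: m_assoc)
      moreover have "x \<otimes> inv h \<in> H" using H x h by (auto intro!: subgroup.m_closed subgroup.m_inv_closed)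
      ultimately show "x \<in> {l \<otimes> h \<otimes> k | l k. l \<in> H \<and> k \<in> K}" using subgroup.one_closed[OF K] by blast
    qed
  qed
  moreover have "H \<noteq> {}" using H subgroup.one_closed by blast
  moreover have "dcosets G H H K = (\<lambda>h. {l \<otimes> h \<otimes> k | l k. l \<in> H \<and> k \<in> K}) ` H"
    unfolding dcosets_def by blast
  ultimately show ?thesis by auto
qed

lemma lcos_subgroup_self: "subgroup K G \<Longrightarrow> k \<in> K \<Longrightarrow> k <# K = K"
proof -
  assume K: "subgroup K G" and k: "k \<in> K"
  have "k \<in> \<one> <# K" using k lcos_mult_one[OF subgroup.subset[OF K]] by simp
  then have "\<one> <# K = k <# K" by (rule l_repr_independence[OF _ one_closed K])
  then show ?thesis using lcos_mult_one[OF subgroup.subset[OF K]] by simp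
qed

lemma lcos_mem_cosets_in: "h \<in> H \<Longrightarrow> h <# K \<in> cosets_in G H K"
  unfolding cosets_in_def by blast

lemma cosets_in_lcos_closed:
  assumes H: "subgroup H G" and K: "K \<subseteq> carrier G" and h: "h \<in> H" and x: "x \<in> cosets_in G H K"
  shows "h <# x \<in> cosets_in G H K"
proof -
  obtain h1 where h1: "h1 \<in> H" "x = h1 <# K" using x unfolding cosets_in_def by blast
  have "h <# x = (h \<otimes> h1) <# K"
    unfolding h1(2) using lcos_m_assoc[OF K] h h1 subgroup.subset[OF H] by blast
  then show ?thesis using subgroup.m_closed[OF H h h1(1)] unfolding cosets_in_def by blast
qed

lemma cosets_in_subset_carrier:
  assumes H: "subgroup H G" and K: "K \<subseteq> carrier G" and x: "x \<in> cosets_in G H K"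
  shows "x \<subseteq> carrier G"
  using x l_coset_subset_G[OF K] subgroup.subset[OF H] unfolding cosets_in_def by blast

lemma lcos_inv_lcos:
  "x \<subseteq> carrier G \<Longrightarrow> h \<in> carrier G \<Longrightarrow> h <# (inv h <# x) = x"
  by (simp add: lcos_m_assoc lcos_mult_one)

lemma subgroup_bool_stab:
  assumes H: "subgroup H G" and K: "K \<subseteq> carrier G"
  shows "subgroup (bool_stab G H K s) G"
proof (rule subgroupI)
  let ?S = "bool_stab G H K s"
  note cosets = cosets_in_lcos_closed[OF H K] cosets_in_subset_carrier[OF H K]
  show "?S \<subseteq> carrier G" unfolding bool_stab_def using subgroup.subset[OF H] by blast
  show "?S \<noteq> {}"
    unfolding bool_stab_def using subgroup.one_closed[OF H] cosets(2) lcos_mult_one by auto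
  fix x y assume x: "x \<in> ?S" and y: "y \<in> ?S"
  then have xy: "x \<in> H" "y \<in> H" "x \<in> carrier G" "y \<in> carrier G"
    unfolding bool_stab_def using subgroup.subset[OF H] by auto
  show "inv x \<in> ?S" unfolding bool_stab_def
  proof (intro CollectI conjI ballI)
    show "inv x \<in> H" by (rule subgroup.m_inv_closed[OF H xy(1)])
    fix c assume c: "c \<in> cosets_in G H K"
    have "s (x <# (inv x <# c)) = s (inv x <# c)"
      using x cosets(1)[OF \<open>inv x \<in> H\<close> c] unfolding bool_stab_def by blast
    then show "s (inv x <# c) = s c" using lcos_inv_lcos[OF cosets(2)[OF c] xy(3)] by simp
  qed
  show "x \<otimes> y \<in> ?S" unfolding bool_stab_def
  proof (intro CollectI conjI ballI)
    show "x \<otimes> y \<in> H" by (rule subgroup.m_closed[OF H xy(1,2)])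
    fix c assume c: "c \<in> cosets_in G H K"
    have "(x \<otimes> y) <# c = x <# (y <# c)" using lcos_m_assoc[OF cosets(2)[OF c] xy(3,4)] by simp
    then show "s ((x \<otimes> y) <# c) = s c"
      using x y c cosets(1)[OF xy(2) c] unfolding bool_stab_def by simp
  qed
qed

lemma subgroup_sec_stab:
  assumes H: "subgroup H G" and K: "K \<subseteq> carrier G"
    and sc: "\<And>x. x \<in> cosets_in G H K \<Longrightarrow> s x \<subseteq> carrier G"
  shows "subgroup (sec_stab G H K s) G"
proof (rule subgroupI)
  let ?S = "sec_stab G H K s"
  note cosets = cosets_in_lcos_closed[OF H K] cosets_in_subset_carrier[OF H K]
  show "?S \<subseteq> carrier G" unfolding sec_stab_def using subgroup.subset[OF H] by blast
  show "?S \<noteq> {}"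
    unfolding sec_stab_def using subgroup.one_closed[OF H] cosets(2) lcos_mult_one sc by auto
  fix x y assume x: "x \<in> ?S" and y: "y \<in> ?S"
  then have xy: "x \<in> H" "y \<in> H" "x \<in> carrier G" "y \<in> carrier G"
    unfolding sec_stab_def using subgroup.subset[OF H] by auto
  show "inv x \<in> ?S" unfolding sec_stab_def
  proof (intro CollectI conjI ballI)
    show ix: "inv x \<in> H" by (rule subgroup.m_inv_closed[OF H xy(1)])
    fix c assume c: "c \<in> cosets_in G H K"
    have "x <# s (inv x <# c) = s (x <# (inv x <# c))"
      using x cosets(1)[OF ix c] unfolding sec_stab_def by blast
    then have "inv x <# s c = inv x <# (x <# s (inv x <# c))"
      using lcos_inv_lcos[OF cosets(2)[OF c] xy(3)] by simp
    also have "\<dots> = s (inv x <# c)"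
      using lcos_inv_lcos[OF sc[OF cosets(1)[OF ix c]] inv_closed[OF xy(3)]] xy(3) by simp
    finally show "inv x <# s c = s (inv x <# c)" .
  qed
  show "x \<otimes> y \<in> ?S" unfolding sec_stab_def
  proof (intro CollectI conjI ballI)
    show "x \<otimes> y \<in> H" by (rule subgroup.m_closed[OF H xy(1,2)])
    fix c assume c: "c \<in> cosets_in G H K"
    have "(x \<otimes> y) <# s c = x <# (y <# s c)" using lcos_m_assoc[OF sc[OF c] xy(3,4)] by simp
    also have "\<dots> = s (x <# (y <# c))"
      using x y c cosets(1)[OF xy(2) c] unfolding sec_stab_def by simp
    also have "x <# (y <# c) = (x \<otimes> y) <# c" using lcos_m_assoc[OF cosets(2)[OF c] xy(3,4)] by simp
    finally show "(x \<otimes> y) <# s c = s ((x \<otimes> y) <# c)" .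
  qed
qed

lemma sec_orbits_some_value:
  assumes H: "subgroup H G" and K: "K \<subseteq> carrier G" and L: "subgroup L G"
    and Ob: "Ob \<in> sec_orbits G H K L" and x: "x \<in> cosets_in G H K"
  shows "\<exists>h'\<in>H. (SOME s. s \<in> Ob) x = h' <# L"
proof -
  obtain s0 where s0: "s0 \<in> sections G H K L" "Ob = {sec_act G H K h s0 | h. h \<in> H}"
    using Ob unfolding sec_orbits_def by blast
  have "sec_act G H K \<one> s0 \<in> Ob" using s0(2) subgroup.one_closed[OF H] by blast
  then have "(SOME s. s \<in> Ob) \<in> Ob" by (rule someI[where P = "\<lambda>s. s \<in> Ob"])
  then obtain h where h: "h \<in> H" "(SOME s. s \<in> Ob) = sec_act G H K h s0" using s0(2) by blast
  have hc: "h \<in> carrier G" using h subgroup.subset[OF H] by blast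
  have "inv h <# x \<in> cosets_in G H K"
    by (rule cosets_in_lcos_closed[OF H K subgroup.m_inv_closed[OF H h(1)] x])
  then have "s0 (inv h <# x) \<in> cosets_in G H L" using s0(1) unfolding sections_def by blast
  then obtain h2 where h2: "h2 \<in> H" "s0 (inv h <# x) = h2 <# L" unfolding cosets_in_def by blast
  have "(SOME s. s \<in> Ob) x = h <# (h2 <# L)" using h(2) x h2(2) unfolding sec_act_def by simp
  also have "\<dots> = (h \<otimes> h2) <# L"
    using lcos_m_assoc[OF subgroup.subset[OF L] hc] h2(1) subgroup.subset[OF H] by blast
  finally show ?thesis using subgroup.m_closed[OF H h(1) h2(1)] by blast
qed

text \<open>\<open>conjg G h K\<close> is the stabiliser of the coset \<open>hK\<close>, so an element of the left-hand side also
  fixes \<open>s (hK) = h'L\<close>.\<close>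
lemma sec_stab_Int_conjg_subset:
  assumes H: "subgroup H G" and K: "subgroup K G" and L: "subgroup L G"
    and sc: "\<And>x. x \<in> cosets_in G H K \<Longrightarrow> s x \<subseteq> carrier G"
    and h: "h \<in> H" and h': "h' \<in> H" and eq: "s (h <# K) = h' <# L"
  shows "sec_stab G H K s \<inter> conjg G h K \<subseteq> conjg G h' L"
proof
  fix m assume m: "m \<in> sec_stab G H K s \<inter> conjg G h K"
  have Kc: "K \<subseteq> carrier G" and Lc: "L \<subseteq> carrier G"
    using K L subgroup.subset by auto
  have hc: "h \<in> carrier G" and h'c: "h' \<in> carrier G" and mc: "m \<in> carrier G"
    using h h' m subgroup.subset[OF H] unfolding sec_stab_def by auto
  obtain k where k: "k \<in> K" "inv h \<otimes> m \<otimes> h = k" using m conjg_mem_iff[OF hc Kc mc] by blast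
  have "m \<otimes> h = h \<otimes> k" using k(2) hc mc by (metis mult_inv_cancel_left inv_closed m_assoc m_closed)
  then have "m <# (h <# K) = h <# K"
    using lcos_subgroup_self[OF K k(1)] k(1) Kc hc mc by (metis lcos_m_assoc subsetD)
  moreover have "m <# s (h <# K) = s (m <# (h <# K))"
    using m lcos_mem_cosets_in[OF h] unfolding sec_stab_def by blast
  ultimately have "(m \<otimes> h') <# L = h' <# L" using eq lcos_m_assoc[OF Lc mc h'c] by simp
  moreover have "m \<otimes> h' \<in> (m \<otimes> h') <# L"
    unfolding l_coset_def using subgroup.one_closed[OF L] mc h'c by force
  ultimately obtain l where l: "l \<in> L" "m \<otimes> h' = h' \<otimes> l" unfolding l_coset_def by auto
  then have "inv h' \<otimes> m \<otimes> h' = l"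
    using h'c mc Lc by (metis inv_mult_cancel_left inv_closed m_assoc subsetD)
  then show "m \<in> conjg G h' L" using conjg_mem_iff[OF h'c Lc mc] l(1) by simp
qed

end

lemma (in cring) idealI_comm:
  assumes sub: "I \<subseteq> carrier R" and zero: "\<zero> \<in> I"
    and add: "\<And>a b. a \<in> I \<Longrightarrow> b \<in> I \<Longrightarrow> a \<oplus> b \<in> I"
    and mult: "\<And>a x. a \<in> I \<Longrightarrow> x \<in> carrier R \<Longrightarrow> x \<otimes> a \<in> I"
  shows "ideal I R"
proof (rule idealI)
  have "\<ominus> a \<in> I" if "a \<in> I" for a
    using mult[OF that, of "\<ominus> \<one>"] that sub by (simp add: l_minus subsetD)
  then show "subgroup I (add_monoid R)"
    by (intro add.subgroupI) (use sub zero add in \<open>auto simp: a_inv_def[symmetric]\<close>)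
  show "a \<otimes> x \<in> I" if "a \<in> I" "x \<in> carrier R" for a x
    using mult[OF that] that sub by (metis m_comm subsetD)
qed (use mult ring_axioms in auto)

lemma (in ring) ideal_finsum_closed:
  assumes I: "ideal I R" and f: "\<And>x. x \<in> A \<Longrightarrow> f x \<in> I"
  shows "finsum R f A \<in> I"
proof (cases "finite A")
  case True
  interpret ideal I R by (rule I)
  from True f show ?thesis
    by (induction A rule: finite_induct) (auto simp: finsum_insert Pi_iff)
qed (simp add: finsum_infinite additive_subgroup.zero_closed[OF ideal.axioms(1)[OF I]])

lemma (in cring) finprod_factor:
  assumes A: "finite A" and x: "x \<in> A" and f: "f \<in> A \<rightarrow> carrier R"
  shows "\<exists>r \<in> carrier R. finprod R f A = r \<otimes> f x"
proof
  have "finprod R f A = finprod R f (insert x (A - {x}))" using x by (simp add: insert_absorb)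
  also have "\<dots> = f x \<otimes> finprod R f (A - {x})" using A x f by (intro finprod_insert) auto
  finally show "finprod R f A = finprod R f (A - {x}) \<otimes> f x" using f x by (simp add: m_comm Pi_iff)
qed (use f in \<open>auto intro!: finprod_closed\<close>)

lemma (in cring) ideal_finprod_closed:
  assumes I: "ideal I R" and A: "finite A" and x: "x \<in> A" and f: "f \<in> A \<rightarrow> carrier R"
    and fx: "f x \<in> I"
  shows "finprod R f A \<in> I"
  using finprod_factor[OF A x f] ideal.I_l_closed[OF I fx] by auto

locale finite_tambara =
  fixes G :: "('g, 'b) monoid_scheme" (structure) and T :: "('g, 'r) tambara_data"
  assumes is_group: "group G" and finite_carrier: "finite (carrier G)"
    and is_tambara: "tambara_functor G T"
begin

sublocale group G by (rule is_group)

abbreviation "R H \<equiv> lev T H"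
abbreviation "sg H \<equiv> subgroup H G"

lemma cring_lev: "sg H \<Longrightarrow> cring (R H)"
  using is_tambara unfolding tambara_functor_def by (elim conjE) (simp only:)

lemma res_hom: "sg H \<Longrightarrow> sg K \<Longrightarrow> K \<subseteq> H \<Longrightarrow> res T K H \<in> ring_hom (R H) (R K)"
  using is_tambara unfolding tambara_functor_def by (elim conjE) (simp only:)

lemma cj_hom: "g \<in> carrier G \<Longrightarrow> sg K \<Longrightarrow> cj T g K \<in> ring_hom (R K) (R (conjg G g K))"
  using is_tambara unfolding tambara_functor_def by (elim conjE) (simp only:)

lemma tr_closed: "sg H \<Longrightarrow> sg K \<Longrightarrow> K \<subseteq> H \<Longrightarrow> a \<in> carrier (R K) \<Longrightarrow> tr T K H a \<in> carrier (R H)"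
  using is_tambara unfolding tambara_functor_def by (elim conjE) (simp only: Ball_def)

lemma nm_closed: "sg H \<Longrightarrow> sg K \<Longrightarrow> K \<subseteq> H \<Longrightarrow> a \<in> carrier (R K) \<Longrightarrow> nm T K H a \<in> carrier (R H)"
  using is_tambara unfolding tambara_functor_def by (elim conjE) (simp only: Ball_def)

lemma tr_add:
  "sg H \<Longrightarrow> sg K \<Longrightarrow> K \<subseteq> H \<Longrightarrow> a \<in> carrier (R K) \<Longrightarrow> b \<in> carrier (R K) \<Longrightarrow>
    tr T K H (a \<oplus>\<^bsub>R K\<^esub> b) = tr T K H a \<oplus>\<^bsub>R H\<^esub> tr T K H b"
  using is_tambara unfolding tambara_functor_def by (elim conjE) (simp only: Ball_def)

lemma nm_mult:
  "sg H \<Longrightarrow> sg K \<Longrightarrow> K \<subseteq> H \<Longrightarrow> a \<in> carrier (R K) \<Longrightarrow> b \<in> carrier (R K) \<Longrightarrow>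
    nm T K H (a \<otimes>\<^bsub>R K\<^esub> b) = nm T K H a \<otimes>\<^bsub>R H\<^esub> nm T K H b"
  using is_tambara unfolding tambara_functor_def by (elim conjE) (simp only: Ball_def)

lemma nm_zero: "sg H \<Longrightarrow> sg K \<Longrightarrow> K \<subseteq> H \<Longrightarrow> nm T K H \<zero>\<^bsub>R K\<^esub> = \<zero>\<^bsub>R H\<^esub>"
  using is_tambara unfolding tambara_functor_def by (elim conjE) (simp only:)

lemma res_id: "sg H \<Longrightarrow> a \<in> carrier (R H) \<Longrightarrow> res T H H a = a"
  using is_tambara unfolding tambara_functor_def by (elim conjE) (simp only: Ball_def)

lemma tr_id: "sg H \<Longrightarrow> a \<in> carrier (R H) \<Longrightarrow> tr T H H a = a"
  using is_tambara unfolding tambara_functor_def by (elim conjE) (simp only: Ball_def)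

lemma nm_id: "sg H \<Longrightarrow> a \<in> carrier (R H) \<Longrightarrow> nm T H H a = a"
  using is_tambara unfolding tambara_functor_def by (elim conjE) (simp only: Ball_def)

lemma res_res:
  "sg H \<Longrightarrow> sg K \<Longrightarrow> sg L \<Longrightarrow> L \<subseteq> K \<Longrightarrow> K \<subseteq> H \<Longrightarrow> a \<in> carrier (R H) \<Longrightarrow>
    res T L K (res T K H a) = res T L H a"
  using is_tambara unfolding tambara_functor_def by (elim conjE) (simp only: Ball_def)

lemma tr_tr:
  "sg H \<Longrightarrow> sg K \<Longrightarrow> sg L \<Longrightarrow> L \<subseteq> K \<Longrightarrow> K \<subseteq> H \<Longrightarrow> a \<in> carrier (R L) \<Longrightarrow>
    tr T K H (tr T L K a) = tr T L H a"
  using is_tambara unfolding tambara_functor_def by (elim conjE) (simp only: Ball_def)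

lemma nm_nm:
  "sg H \<Longrightarrow> sg K \<Longrightarrow> sg L \<Longrightarrow> L \<subseteq> K \<Longrightarrow> K \<subseteq> H \<Longrightarrow> a \<in> carrier (R L) \<Longrightarrow>
    nm T K H (nm T L K a) = nm T L H a"
  using is_tambara unfolding tambara_functor_def by (elim conjE) (simp only: Ball_def)

lemma cj_subgroup_self: "sg H \<Longrightarrow> h \<in> H \<Longrightarrow> a \<in> carrier (R H) \<Longrightarrow> cj T h H a = a"
  using is_tambara unfolding tambara_functor_def by (elim conjE) (simp only: Ball_def)

lemma cj_cj:
  "g \<in> carrier G \<Longrightarrow> g' \<in> carrier G \<Longrightarrow> sg K \<Longrightarrow> a \<in> carrier (R K) \<Longrightarrow>
    cj T g (conjg G g' K) (cj T g' K a) = cj T (g \<otimes> g') K a"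
  using is_tambara unfolding tambara_functor_def by (elim conjE) (simp only: Ball_def)

lemma cj_res:
  "g \<in> carrier G \<Longrightarrow> sg H \<Longrightarrow> sg K \<Longrightarrow> K \<subseteq> H \<Longrightarrow> a \<in> carrier (R H) \<Longrightarrow>
    cj T g K (res T K H a) = res T (conjg G g K) (conjg G g H) (cj T g H a)"
  using is_tambara unfolding tambara_functor_def by (elim conjE) (simp only: Ball_def)

lemma cj_tr:
  "g \<in> carrier G \<Longrightarrow> sg H \<Longrightarrow> sg K \<Longrightarrow> K \<subseteq> H \<Longrightarrow> a \<in> carrier (R K) \<Longrightarrow>
    cj T g H (tr T K H a) = tr T (conjg G g K) (conjg G g H) (cj T g K a)"
  using is_tambara unfolding tambara_functor_def by (elim conjE) (simp only: Ball_def)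

lemma cj_nm:
  "g \<in> carrier G \<Longrightarrow> sg H \<Longrightarrow> sg K \<Longrightarrow> K \<subseteq> H \<Longrightarrow> a \<in> carrier (R K) \<Longrightarrow>
    cj T g H (nm T K H a) = nm T (conjg G g K) (conjg G g H) (cj T g K a)"
  using is_tambara unfolding tambara_functor_def by (elim conjE) (simp only: Ball_def)

lemma tr_mult_frobenius:
  "sg H \<Longrightarrow> sg K \<Longrightarrow> K \<subseteq> H \<Longrightarrow> a \<in> carrier (R K) \<Longrightarrow> b \<in> carrier (R H) \<Longrightarrow>
    tr T K H a \<otimes>\<^bsub>R H\<^esub> b = tr T K H (a \<otimes>\<^bsub>R K\<^esub> res T K H b)"
  using is_tambara unfolding tambara_functor_def by (elim conjE) (simp only: Ball_def)

lemma res_tr_double_coset: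
  "sg H \<Longrightarrow> sg K \<Longrightarrow> sg L \<Longrightarrow> K \<subseteq> H \<Longrightarrow> L \<subseteq> H \<Longrightarrow> a \<in> carrier (R K) \<Longrightarrow>
    res T L H (tr T K H a) =
      finsum (R L)
        (\<lambda>D. let h = dcrep G H L K D; K' = conjg G (inv h) L \<inter> K in
          tr T (L \<inter> conjg G h K) L (cj T h K' (res T K' K a)))
        (dcosets G H L K)"
  using is_tambara unfolding tambara_functor_def by (elim conjE) (simp only: Ball_def)

lemma res_nm_double_coset:
  "sg H \<Longrightarrow> sg K \<Longrightarrow> sg L \<Longrightarrow> K \<subseteq> H \<Longrightarrow> L \<subseteq> H \<Longrightarrow> a \<in> carrier (R K) \<Longrightarrow>
    res T L H (nm T K H a) =
      finprod (R L)
        (\<lambda>D. let h = dcrep G H L K D; K' = conjg G (inv h) L \<inter> K in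
          nm T (L \<inter> conjg G h K) L (cj T h K' (res T K' K a)))
        (dcosets G H L K)"
  using is_tambara unfolding tambara_functor_def by (elim conjE) (simp only: Ball_def)

lemma nm_add_reciprocity:
  "sg H \<Longrightarrow> sg K \<Longrightarrow> K \<subseteq> H \<Longrightarrow> a \<in> carrier (R K) \<Longrightarrow> b \<in> carrier (R K) \<Longrightarrow>
    nm T K H (a \<oplus>\<^bsub>R K\<^esub> b) =
      finsum (R H)
        (\<lambda>Ob. let s = (SOME s. s \<in> Ob); M = bool_stab G H K s in
          tr T M H
            (finprod (R M)
              (\<lambda>D. let h = dcrep G H M K D; K' = conjg G (inv h) M \<inter> K in
                nm T (M \<inter> conjg G h K) M
                  (cj T h K' (res T K' K (if s (h <# K) then a else b))))
              (dcosets G H M K)))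
        (bool_orbits G H K)"
  using is_tambara unfolding tambara_functor_def by (elim conjE) (simp only: Ball_def)

lemma nm_tr_reciprocity:
  "sg H \<Longrightarrow> sg K \<Longrightarrow> sg L \<Longrightarrow> L \<subseteq> K \<Longrightarrow> K \<subseteq> H \<Longrightarrow> a \<in> carrier (R L) \<Longrightarrow>
    nm T K H (tr T L K a) =
      finsum (R H)
        (\<lambda>Ob. let s = (SOME s. s \<in> Ob); M = sec_stab G H K s in
          tr T M H
            (finprod (R M)
              (\<lambda>D. let h = dcrep G H M K D;
                      h' = (SOME h'. h' \<in> H \<and> s (h <# K) = h' <# L) in
                nm T (M \<inter> conjg G h K) M
                  (res T (M \<inter> conjg G h K) (conjg G h' L) (cj T h' L a)))
              (dcosets G H M K)))
        (sec_orbits G H K L)"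
  using is_tambara unfolding tambara_functor_def by (elim conjE) (simp only: Ball_def)

lemma res_closed: "sg H \<Longrightarrow> sg K \<Longrightarrow> K \<subseteq> H \<Longrightarrow> a \<in> carrier (R H) \<Longrightarrow> res T K H a \<in> carrier (R K)"
  by (rule ring_hom_closed[OF res_hom])

lemma res_mult:
  "sg H \<Longrightarrow> sg K \<Longrightarrow> K \<subseteq> H \<Longrightarrow> a \<in> carrier (R H) \<Longrightarrow> b \<in> carrier (R H) \<Longrightarrow>
    res T K H (a \<otimes>\<^bsub>R H\<^esub> b) = res T K H a \<otimes>\<^bsub>R K\<^esub> res T K H b"
  by (rule ring_hom_mult[OF res_hom])

lemma res_add:
  "sg H \<Longrightarrow> sg K \<Longrightarrow> K \<subseteq> H \<Longrightarrow> a \<in> carrier (R H) \<Longrightarrow> b \<in> carrier (R H) \<Longrightarrow>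
    res T K H (a \<oplus>\<^bsub>R H\<^esub> b) = res T K H a \<oplus>\<^bsub>R K\<^esub> res T K H b"
  by (rule ring_hom_add[OF res_hom])

lemma res_zero: "sg H \<Longrightarrow> sg K \<Longrightarrow> K \<subseteq> H \<Longrightarrow> res T K H \<zero>\<^bsub>R H\<^esub> = \<zero>\<^bsub>R K\<^esub>"
  by (rule ring_hom_zero[OF res_hom cring.axioms(1)[OF cring_lev] cring.axioms(1)[OF cring_lev]])

lemma cj_closed: "g \<in> carrier G \<Longrightarrow> sg K \<Longrightarrow> a \<in> carrier (R K) \<Longrightarrow> cj T g K a \<in> carrier (R (conjg G g K))"
  by (rule ring_hom_closed[OF cj_hom])

lemma cj_mult:
  "g \<in> carrier G \<Longrightarrow> sg K \<Longrightarrow> a \<in> carrier (R K) \<Longrightarrow> b \<in> carrier (R K) \<Longrightarrow>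
    cj T g K (a \<otimes>\<^bsub>R K\<^esub> b) = cj T g K a \<otimes>\<^bsub>R (conjg G g K)\<^esub> cj T g K b"
  by (rule ring_hom_mult[OF cj_hom])

lemma cj_add:
  "g \<in> carrier G \<Longrightarrow> sg K \<Longrightarrow> a \<in> carrier (R K) \<Longrightarrow> b \<in> carrier (R K) \<Longrightarrow>
    cj T g K (a \<oplus>\<^bsub>R K\<^esub> b) = cj T g K a \<oplus>\<^bsub>R (conjg G g K)\<^esub> cj T g K b"
  by (rule ring_hom_add[OF cj_hom])

lemma cj_zero: "g \<in> carrier G \<Longrightarrow> sg K \<Longrightarrow> cj T g K \<zero>\<^bsub>R K\<^esub> = \<zero>\<^bsub>R (conjg G g K)\<^esub>"
  by (rule ring_hom_zero[OF cj_hom cring.axioms(1)[OF cring_lev] cring.axioms(1)[OF cring_lev[OF subgroup_conjg]]])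

lemma tr_zero:
  assumes H: "sg H" and K: "sg K" and KH: "K \<subseteq> H"
  shows "tr T K H \<zero>\<^bsub>R K\<^esub> = \<zero>\<^bsub>R H\<^esub>"
proof -
  interpret RH: cring "R H" using cring_lev[OF H] .
  interpret RK: cring "R K" using cring_lev[OF K] .
  have c: "tr T K H \<zero>\<^bsub>R K\<^esub> \<in> carrier (R H)" using tr_closed[OF H K KH] by simp
  have "tr T K H \<zero>\<^bsub>R K\<^esub> \<oplus>\<^bsub>R H\<^esub> tr T K H \<zero>\<^bsub>R K\<^esub> = tr T K H \<zero>\<^bsub>R K\<^esub> \<oplus>\<^bsub>R H\<^esub> \<zero>\<^bsub>R H\<^esub>"
    using tr_add[OF H K KH, of "\<zero>\<^bsub>R K\<^esub>" "\<zero>\<^bsub>R K\<^esub>"] c by simp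
  then show ?thesis using c by simp
qed

lemma finite_subgroup: "sg H \<Longrightarrow> finite H"
  by (rule finite_subset[OF subgroup.subset finite_carrier])

lemma finite_subgroups: "finite {H. sg H}"
  by (rule finite_subset[of _ "Pow (carrier G)"]) (auto dest: subgroup.subset simp: finite_carrier)

lemma dcosets_summand_data:
  assumes H: "sg H" and L: "sg L" and K: "sg K" and D: "D \<in> dcosets G H L K"
  defines "h \<equiv> dcrep G H L K D"
  shows "h \<in> carrier G" "sg (conjg G (inv h) L \<inter> K)" "conjg G (inv h) L \<inter> K \<subseteq> K"
    "sg (L \<inter> conjg G h K)" "L \<inter> conjg G h K \<subseteq> L"
    "conjg G h (conjg G (inv h) L \<inter> K) = L \<inter> conjg G h K"
proof -
  show hc: "h \<in> carrier G" using dcrep_mem[OF D] subgroup.subset[OF H] unfolding h_def by blast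
  show "sg (conjg G (inv h) L \<inter> K)" by (rule subgroups_Inter_pair[OF subgroup_conjg[OF inv_closed[OF hc] L] K])
  show "sg (L \<inter> conjg G h K)" by (rule subgroups_Inter_pair[OF L subgroup_conjg[OF hc K]])
  show "conjg G h (conjg G (inv h) L \<inter> K) = L \<inter> conjg G h K"
    by (rule conjg_conjg_inv_Int[OF hc subgroup.subset[OF L] subgroup.subset[OF K]])
qed (rule Int_lower2, rule Int_lower1)

lemma tambara_idealI:
  assumes "\<And>H. \<not> sg H \<Longrightarrow> I H = {}"
    and "\<And>H. sg H \<Longrightarrow> ideal (I H) (R H)"
    and "\<And>H K x. sg H \<Longrightarrow> sg K \<Longrightarrow> K \<subseteq> H \<Longrightarrow> x \<in> I H \<Longrightarrow> res T K H x \<in> I K"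
    and "\<And>H K x. sg H \<Longrightarrow> sg K \<Longrightarrow> K \<subseteq> H \<Longrightarrow> x \<in> I K \<Longrightarrow> tr T K H x \<in> I H"
    and "\<And>H K x. sg H \<Longrightarrow> sg K \<Longrightarrow> K \<subseteq> H \<Longrightarrow> x \<in> I K \<Longrightarrow> nm T K H x \<in> I H"
    and "\<And>g K x. g \<in> carrier G \<Longrightarrow> sg K \<Longrightarrow> x \<in> I K \<Longrightarrow> cj T g K x \<in> I (conjg G g K)"
  shows "tambara_ideal G T I"
  unfolding tambara_ideal_def by (intro conjI allI impI ballI) (simp_all add: assms)

context
  fixes I assumes I: "tambara_ideal G T I"
begin

lemma tambara_ideal_subgroup: "x \<in> I H \<Longrightarrow> sg H"
  using I[unfolded tambara_ideal_def, THEN conjunct1] by blast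

lemma tambara_ideal_ideal: "sg H \<Longrightarrow> ideal (I H) (R H)"
  using I unfolding tambara_ideal_def by (elim conjE) (simp only: Ball_def)

lemma tambara_ideal_carrier: "x \<in> I H \<Longrightarrow> x \<in> carrier (R H)"
  by (rule ideal.Icarr[OF tambara_ideal_ideal[OF tambara_ideal_subgroup]])

lemma tambara_ideal_zero: "sg H \<Longrightarrow> \<zero>\<^bsub>R H\<^esub> \<in> I H"
  by (rule additive_subgroup.zero_closed[OF ideal.axioms(1)[OF tambara_ideal_ideal]])

lemma tambara_ideal_add: "x \<in> I H \<Longrightarrow> y \<in> I H \<Longrightarrow> x \<oplus>\<^bsub>R H\<^esub> y \<in> I H"
  by (rule additive_subgroup.a_closed[OF ideal.axioms(1)[OF tambara_ideal_ideal[OF tambara_ideal_subgroup]]])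

lemma tambara_ideal_mult: "x \<in> I H \<Longrightarrow> c \<in> carrier (R H) \<Longrightarrow> c \<otimes>\<^bsub>R H\<^esub> x \<in> I H"
  by (rule ideal.I_l_closed[OF tambara_ideal_ideal[OF tambara_ideal_subgroup]])

lemma tambara_ideal_res: "sg H \<Longrightarrow> sg K \<Longrightarrow> K \<subseteq> H \<Longrightarrow> x \<in> I H \<Longrightarrow> res T K H x \<in> I K"
  using I unfolding tambara_ideal_def by (elim conjE) (simp only: Ball_def)

lemma tambara_ideal_tr: "sg H \<Longrightarrow> sg K \<Longrightarrow> K \<subseteq> H \<Longrightarrow> x \<in> I K \<Longrightarrow> tr T K H x \<in> I H"
  using I unfolding tambara_ideal_def by (elim conjE) (simp only: Ball_def)

lemma tambara_ideal_nm: "sg H \<Longrightarrow> sg K \<Longrightarrow> K \<subseteq> H \<Longrightarrow> x \<in> I K \<Longrightarrow> nm T K H x \<in> I H"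
  using I unfolding tambara_ideal_def by (elim conjE) (simp only: Ball_def)

lemma tambara_ideal_cj: "g \<in> carrier G \<Longrightarrow> sg K \<Longrightarrow> x \<in> I K \<Longrightarrow> cj T g K x \<in> I (conjg G g K)"
  using I unfolding tambara_ideal_def by (elim conjE) (simp only: Ball_def)

end

lemma tambara_ideal_Inter:
  assumes ne: "\<I> \<noteq> {}" and ideals: "\<And>I. I \<in> \<I> \<Longrightarrow> tambara_ideal G T I"
  shows "tambara_ideal G T (\<lambda>H. \<Inter>I\<in>\<I>. I H)"
proof (rule tambara_idealI)
  show "(\<Inter>I\<in>\<I>. I H) = {}" if "\<not> sg H" for H
    using ne tambara_ideal_subgroup[OF ideals] that by blast
  show "ideal (\<Inter>I\<in>\<I>. I H) (R H)" if "sg H" for H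
    using ring.i_Intersect[OF cring.axioms(1)[OF cring_lev[OF that]], of "(\<lambda>I. I H) ` \<I>"]
      tambara_ideal_ideal[OF ideals that] ne by blast
qed (use tambara_ideal_res[OF ideals] tambara_ideal_tr[OF ideals] tambara_ideal_nm[OF ideals] tambara_ideal_cj[OF ideals] in \<open>simp; blast\<close>)+

lemma tambara_sub_prod:
  assumes Q: "tambara_ideal G T Q"
    and sub: "\<And>H. sg H \<Longrightarrow> ideal_prod (R H) (I H) (J H) \<subseteq> Q H"
  shows "tambara_sub (tambara_prod G T I J) Q"
  using assms unfolding tambara_sub_def tambara_prod_def tambara_gen_def by auto

lemma ideal_prod_subset_tambara_prod:
  "sg H \<Longrightarrow> ideal_prod (R H) (I H) (J H) \<subseteq> tambara_prod G T I J H"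
  unfolding tambara_prod_def tambara_gen_def by auto

lemma tambara_prime_ideal: "tambara_prime G T P \<Longrightarrow> tambara_ideal G T P"
  unfolding tambara_prime_def by blast

lemma tambara_prime_one: "tambara_prime G T P \<Longrightarrow> \<one>\<^bsub>R (carrier G)\<^esub> \<notin> P (carrier G)"
  unfolding tambara_prime_def by blast

lemma tambara_primeD:
  "tambara_prime G T P \<Longrightarrow> tambara_ideal G T I \<Longrightarrow> tambara_ideal G T J \<Longrightarrow>
    tambara_sub (tambara_prod G T I J) P \<Longrightarrow> tambara_sub I P \<or> tambara_sub J P"
  unfolding tambara_prime_def by blast

lemma tambara_primeI:
  assumes "tambara_ideal G T P" and "\<one>\<^bsub>R (carrier G)\<^esub> \<notin> P (carrier G)"
    and "\<And>I J H K x y. tambara_ideal G T I \<Longrightarrow> tambara_ideal G T J \<Longrightarrow>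
      tambara_sub (tambara_prod G T I J) P \<Longrightarrow> x \<in> I H \<Longrightarrow> y \<in> J K \<Longrightarrow> x \<in> P H \<or> y \<in> P K"
  shows "tambara_prime G T P"
  using assms unfolding tambara_prime_def tambara_sub_def by blast

end

section \<open>Principal Tambara ideals\<close>

context finite_tambara
begin

lemma cj_res_cj_res:
  assumes H0: "sg H0" and a: "a \<in> carrier (R H0)" and H': "sg H'" "H' \<subseteq> H0"
    and g: "g \<in> carrier G" and h: "h \<in> carrier G"
    and K': "sg K'" "K' \<subseteq> conjg G g H'"
  defines "Z \<equiv> conjg G (inv g) K'"
  shows "sg Z" "Z \<subseteq> H0" "conjg G (h \<otimes> g) Z = conjg G h K'"
    "cj T h K' (res T K' (conjg G g H') (cj T g H' (res T H' H0 a))) =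
      cj T (h \<otimes> g) Z (res T Z H0 a)"
proof -
  have H'c: "H' \<subseteq> carrier G" and K'c: "K' \<subseteq> carrier G"
    using subgroup.subset[OF H'(1)] subgroup.subset[OF K'(1)] .
  show Z: "sg Z" unfolding Z_def by (rule subgroup_conjg[OF inv_closed[OF g] K'(1)])
  have K'eq: "K' = conjg G g Z" unfolding Z_def using conjg_conjg_inv[OF g K'c] by simp
  have ZH': "Z \<subseteq> H'"
    using conjg_mono[OF K'(2), of "inv g"] conjg_inv_conjg[OF g H'c] unfolding Z_def by simp
  then show "Z \<subseteq> H0" using H'(2) by blast
  show "conjg G (h \<otimes> g) Z = conjg G h K'"
    using conjg_conjg[OF h g subgroup.subset[OF Z]] K'eq by simp
  have r: "res T H' H0 a \<in> carrier (R H')" by (rule res_closed[OF H0 H' a])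
  have "res T K' (conjg G g H') (cj T g H' (res T H' H0 a)) = cj T g Z (res T Z H' (res T H' H0 a))"
    using cj_res[OF g H'(1) Z ZH' r] K'eq by simp
  also have "res T Z H' (res T H' H0 a) = res T Z H0 a"
    using res_res[OF H0 H'(1) Z ZH' H'(2) a] .
  finally show "cj T h K' (res T K' (conjg G g H') (cj T g H' (res T H' H0 a))) =
      cj T (h \<otimes> g) Z (res T Z H0 a)"
    using cj_cj[OF h g Z res_closed[OF H0 Z \<open>Z \<subseteq> H0\<close> a]] K'eq by simp
qed

text \<open>The multiplicative double coset formula for \<open>L = H\<close>: the only double coset is \<open>H\<close> itself.\<close>
lemma nm_dcosets_self:
  assumes H: "sg H" and K: "sg K" and KH: "K \<subseteq> H" and z: "\<And>h. h \<in> H \<Longrightarrow> z h \<in> carrier (R K)"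
  shows "finprod (R H)
      (\<lambda>D. let h = dcrep G H H K D; K' = conjg G (inv h) H \<inter> K in
        nm T (H \<inter> conjg G h K) H (cj T h K' (res T K' K (z h))))
      (dcosets G H H K) = nm T K H (z (dcrep G H H K H))"
proof -
  interpret RH: cring "R H" by (rule cring_lev[OF H])
  define h where "h = dcrep G H H K H"
  have hH: "h \<in> H" unfolding h_def by (rule dcrep_mem) (simp add: dcosets_self[OF H K KH])
  have hc: "h \<in> carrier G" using hH subgroup.subset[OF H] by blast
  have K'eq: "conjg G (inv h) H \<inter> K = K"
    using conjg_subgroup_self[OF H subgroup.m_inv_closed[OF H hH]] KH by blast
  have cH: "conjg G h H = H" by (rule conjg_subgroup_self[OF H hH])
  have cK: "H \<inter> conjg G h K = conjg G h K" using conjg_mono[OF KH, of h] cH by blast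
  have zc: "z h \<in> carrier (R K)" by (rule z[OF hH])
  have "nm T (conjg G h K) H (cj T h K (z h)) = cj T h H (nm T K H (z h))"
    using cj_nm[OF hc H K KH zc] cH by simp
  also have "\<dots> = nm T K H (z h)" by (rule cj_subgroup_self[OF H hH nm_closed[OF H K KH zc]])
  finally show ?thesis
    using nm_closed[OF H K KH zc] res_id[OF K zc]
    by (simp add: dcosets_self[OF H K KH] h_def[symmetric] K'eq cK)
qed

end

text \<open>The Tambara ideal generated by \<open>a \<in> T(G/H\<^sub>0)\<close>: at level \<open>L\<close> it consists of the finite sums
  of transfers of multiples of norms of conjugated restrictions of \<open>a\<close>.\<close>
locale principal_tambara = finite_tambara +
  fixes H0 and a
  assumes H0: "subgroup H0 G" and a_carrier: "a \<in> carrier (lev T H0)"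
begin

definition norm_gens where
  "norm_gens L = {nm T L' L (cj T g H' (res T H' H0 a)) | L' g H'.
     sg L' \<and> L' \<subseteq> L \<and> sg H' \<and> H' \<subseteq> H0 \<and> g \<in> carrier G \<and> conjg G g H' = L'}"

definition gen_multiples where
  "gen_multiples L = {r \<otimes>\<^bsub>R L\<^esub> u | r u. r \<in> carrier (R L) \<and> u \<in> norm_gens L}"

lemma norm_gensI:
  "sg L' \<Longrightarrow> L' \<subseteq> L \<Longrightarrow> sg H' \<Longrightarrow> H' \<subseteq> H0 \<Longrightarrow> g \<in> carrier G \<Longrightarrow> conjg G g H' = L' \<Longrightarrow>
    nm T L' L (cj T g H' (res T H' H0 a)) \<in> norm_gens L"
  unfolding norm_gens_def by blast

lemma norm_gensE:
  assumes "u \<in> norm_gens L"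
  obtains L' g H' where "sg L'" "L' \<subseteq> L" "sg H'" "H' \<subseteq> H0" "g \<in> carrier G" "conjg G g H' = L'"
    "u = nm T L' L (cj T g H' (res T H' H0 a))"
  using assms unfolding norm_gens_def by blast

lemma cj_res_a_closed:
  "sg H' \<Longrightarrow> H' \<subseteq> H0 \<Longrightarrow> g \<in> carrier G \<Longrightarrow> cj T g H' (res T H' H0 a) \<in> carrier (R (conjg G g H'))"
  by (rule cj_closed[OF _ _ res_closed[OF H0 _ _ a_carrier]])

lemma norm_gens_closed: "sg L \<Longrightarrow> u \<in> norm_gens L \<Longrightarrow> u \<in> carrier (R L)"
  by (erule norm_gensE) (metis cj_res_a_closed nm_closed)

lemma finite_norm_gens: "finite (norm_gens L)"
proof -
  have "norm_gens L \<subseteq> (\<lambda>(L', g, H'). nm T L' L (cj T g H' (res T H' H0 a))) `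
      ({L'. sg L'} \<times> carrier G \<times> {H'. sg H'})"
  proof
    fix u assume "u \<in> norm_gens L"
    then obtain L' g H' where "sg L'" "g \<in> carrier G" "sg H'" "u = nm T L' L (cj T g H' (res T H' H0 a))"
      by (rule norm_gensE)
    then show "u \<in> (\<lambda>(L', g, H'). nm T L' L (cj T g H' (res T H' H0 a))) `
        ({L'. sg L'} \<times> carrier G \<times> {H'. sg H'})"
      by (intro rev_image_eqI[of "(L', g, H')"]) auto
  qed
  then show ?thesis using finite_subgroups finite_carrier finite_subset by blast
qed

lemma a_mem_norm_gens: "a \<in> norm_gens H0"
proof -
  have "nm T H0 H0 (cj T \<one> H0 (res T H0 H0 a)) = a"
    using res_id[OF H0 a_carrier] cj_subgroup_self[OF H0 subgroup.one_closed[OF H0] a_carrier]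
      nm_id[OF H0 a_carrier] by simp
  then show ?thesis
    using norm_gensI[OF H0 subset_refl H0 subset_refl one_closed conjg_one[OF subgroup.subset[OF H0]]]
    by simp
qed

lemma nm_norm_gens:
  assumes L: "sg L" and L2: "sg L2" and LL2: "L \<subseteq> L2" and u: "u \<in> norm_gens L"
  shows "nm T L L2 u \<in> norm_gens L2"
  using u
proof (rule norm_gensE)
  fix L' g H' assume *: "sg L'" "L' \<subseteq> L" "sg H'" "H' \<subseteq> H0" "g \<in> carrier G" "conjg G g H' = L'"
    and u: "u = nm T L' L (cj T g H' (res T H' H0 a))"
  have "nm T L L2 u = nm T L' L2 (cj T g H' (res T H' H0 a))"
    using nm_nm[OF L2 L *(1,2) LL2] cj_res_a_closed[OF *(3,4,5)] *(6) u by simp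
  then show ?thesis using norm_gensI[OF *(1) _ *(3-6)] *(2) LL2 by auto
qed

lemma cj_norm_gens:
  assumes k: "k \<in> carrier G" and L: "sg L" and u: "u \<in> norm_gens L"
  shows "cj T k L u \<in> norm_gens (conjg G k L)"
  using u
proof (rule norm_gensE)
  fix L' g H' assume *: "sg L'" "L' \<subseteq> L" "sg H'" "H' \<subseteq> H0" "g \<in> carrier G" "conjg G g H' = L'"
    and u: "u = nm T L' L (cj T g H' (res T H' H0 a))"
  have r: "res T H' H0 a \<in> carrier (R H')" by (rule res_closed[OF H0 *(3,4) a_carrier])
  have "cj T k L u = nm T (conjg G k L') (conjg G k L) (cj T k L' (cj T g H' (res T H' H0 a)))"
    using cj_nm[OF k L *(1,2)] cj_res_a_closed[OF *(3,4,5)] *(6) u by simp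
  also have "cj T k L' (cj T g H' (res T H' H0 a)) = cj T (k \<otimes> g) H' (res T H' H0 a)"
    using cj_cj[OF k *(5,3) r] *(6) by simp
  finally show ?thesis
    using norm_gensI[OF subgroup_conjg[OF k *(1)] conjg_mono[OF *(2)] *(3,4)] k *(5)
      conjg_conjg[OF k *(5) subgroup.subset[OF *(3)]] *(6) by simp
qed

lemma gen_multiplesI: "r \<in> carrier (R L) \<Longrightarrow> u \<in> norm_gens L \<Longrightarrow> r \<otimes>\<^bsub>R L\<^esub> u \<in> gen_multiples L"
  unfolding gen_multiples_def by blast

lemma gen_multiplesE:
  assumes "m \<in> gen_multiples L"
  obtains r u where "r \<in> carrier (R L)" "u \<in> norm_gens L" "m = r \<otimes>\<^bsub>R L\<^esub> u"
  using assms unfolding gen_multiples_def by blast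

lemma gen_multiples_closed: "sg L \<Longrightarrow> m \<in> gen_multiples L \<Longrightarrow> m \<in> carrier (R L)"
  by (erule gen_multiplesE) (simp add: cring.cring_simprules(5)[OF cring_lev] norm_gens_closed)

lemma norm_gens_subset_gen_multiples: "sg L \<Longrightarrow> norm_gens L \<subseteq> gen_multiples L"
  using gen_multiplesI[OF cring.cring_simprules(6)[OF cring_lev]] norm_gens_closed
  by (metis cring.cring_simprules(12)[OF cring_lev] subsetI)

lemma gen_multiples_mult:
  assumes L: "sg L" and x: "x \<in> carrier (R L)" and m: "m \<in> gen_multiples L"
  shows "x \<otimes>\<^bsub>R L\<^esub> m \<in> gen_multiples L" "m \<otimes>\<^bsub>R L\<^esub> x \<in> gen_multiples L"
proof -
  interpret RL: cring "R L" by (rule cring_lev[OF L])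
  obtain r u where ru: "r \<in> carrier (R L)" "u \<in> norm_gens L" "m = r \<otimes>\<^bsub>R L\<^esub> u"
    using m by (rule gen_multiplesE)
  have "x \<otimes>\<^bsub>R L\<^esub> m = (x \<otimes>\<^bsub>R L\<^esub> r) \<otimes>\<^bsub>R L\<^esub> u" "m \<otimes>\<^bsub>R L\<^esub> x = (x \<otimes>\<^bsub>R L\<^esub> r) \<otimes>\<^bsub>R L\<^esub> u"
    using ru x norm_gens_closed[OF L ru(2)] by (simp_all add: RL.m_ac)
  then show "x \<otimes>\<^bsub>R L\<^esub> m \<in> gen_multiples L" "m \<otimes>\<^bsub>R L\<^esub> x \<in> gen_multiples L"
    using gen_multiplesI[OF _ ru(2)] x ru(1) by simp_all
qed

lemma res_norm_gens:
  assumes L: "sg L" and L2: "sg L2" and L2L: "L2 \<subseteq> L" and u: "u \<in> norm_gens L"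
  shows "res T L2 L u \<in> gen_multiples L2"
  using u
proof (rule norm_gensE)
  fix L' g H' assume *: "sg L'" "L' \<subseteq> L" "sg H'" "H' \<subseteq> H0" "g \<in> carrier G" "conjg G g H' = L'"
    and u: "u = nm T L' L (cj T g H' (res T H' H0 a))"
  define f where "f = (\<lambda>D. let h = dcrep G L L2 L' D; K' = conjg G (inv h) L2 \<inter> L' in
    nm T (L2 \<inter> conjg G h L') L2 (cj T h K' (res T K' L' (cj T g H' (res T H' H0 a)))))"
  have eq: "res T L2 L u = finprod (R L2) f (dcosets G L L2 L')"
    unfolding f_def u using res_nm_double_coset[OF L *(1) L2 *(2) L2L] cj_res_a_closed[OF *(3,4,5)] *(6)
    by simp
  have f: "f D \<in> norm_gens L2" if D: "D \<in> dcosets G L L2 L'" for D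
  proof -
    note dd = dcosets_summand_data[OF L L2 *(1) D]
    note cc = cj_res_cj_res[OF H0 a_carrier *(3,4,5) dd(1) dd(2), unfolded *(6), OF dd(3)]
    show ?thesis
      unfolding f_def Let_def cc(4)
      by (rule norm_gensI[OF dd(4,5) cc(1,2)]) (use dd(1) *(5) cc(3) dd(6) in simp_all)
  qed
  have "dcosets G L L2 L' \<noteq> {}" using subgroup.one_closed[OF L] by (intro dcosets_nonempty) blast
  then obtain D0 where D0: "D0 \<in> dcosets G L L2 L'" by blast
  obtain r where "r \<in> carrier (R L2)" "finprod (R L2) f (dcosets G L L2 L') = r \<otimes>\<^bsub>R L2\<^esub> f D0"
    using cring.finprod_factor[OF cring_lev[OF L2] finite_dcosets[OF finite_subgroup[OF L]] D0]
      f norm_gens_closed[OF L2] by blast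
  then show ?thesis unfolding eq using gen_multiplesI f[OF D0] by simp
qed

lemma res_gen_multiples:
  assumes L: "sg L" and L2: "sg L2" and L2L: "L2 \<subseteq> L" and m: "m \<in> gen_multiples L"
  shows "res T L2 L m \<in> gen_multiples L2"
  using m
proof (rule gen_multiplesE)
  fix r u assume ru: "r \<in> carrier (R L)" "u \<in> norm_gens L" "m = r \<otimes>\<^bsub>R L\<^esub> u"
  then have "res T L2 L m = res T L2 L r \<otimes>\<^bsub>R L2\<^esub> res T L2 L u"
    using res_mult[OF L L2 L2L] norm_gens_closed[OF L] by simp
  then show ?thesis
    using gen_multiples_mult(1)[OF L2 res_closed[OF L L2 L2L ru(1)] res_norm_gens[OF L L2 L2L ru(2)]] by simp
qed

lemma cj_gen_multiples:
  assumes k: "k \<in> carrier G" and L: "sg L" and m: "m \<in> gen_multiples L"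
  shows "cj T k L m \<in> gen_multiples (conjg G k L)"
  using m
proof (rule gen_multiplesE)
  fix r u assume ru: "r \<in> carrier (R L)" "u \<in> norm_gens L" "m = r \<otimes>\<^bsub>R L\<^esub> u"
  then have "cj T k L m = cj T k L r \<otimes>\<^bsub>R (conjg G k L)\<^esub> cj T k L u"
    using cj_mult[OF k L] norm_gens_closed[OF L] by simp
  then show ?thesis using gen_multiplesI[OF cj_closed[OF k L ru(1)] cj_norm_gens[OF k L ru(2)]] by simp
qed

lemma nm_gen_multiples:
  assumes L: "sg L" and L2: "sg L2" and LL2: "L \<subseteq> L2" and m: "m \<in> gen_multiples L"
  shows "nm T L L2 m \<in> gen_multiples L2"
  using m
proof (rule gen_multiplesE)
  fix r u assume ru: "r \<in> carrier (R L)" "u \<in> norm_gens L" "m = r \<otimes>\<^bsub>R L\<^esub> u"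
  then have "nm T L L2 m = nm T L L2 r \<otimes>\<^bsub>R L2\<^esub> nm T L L2 u"
    using nm_mult[OF L2 L LL2] norm_gens_closed[OF L] by simp
  then show ?thesis using gen_multiplesI[OF nm_closed[OF L2 L LL2 ru(1)] nm_norm_gens[OF L L2 LL2 ru(2)]] by simp
qed

inductive in_principal :: "'a set \<Rightarrow> 'c \<Rightarrow> bool" where
  zero: "in_principal L \<zero>\<^bsub>R L\<^esub>"
| step: "sg L' \<Longrightarrow> L' \<subseteq> L \<Longrightarrow> m \<in> gen_multiples L' \<Longrightarrow> in_principal L j \<Longrightarrow>
    in_principal L (tr T L' L m \<oplus>\<^bsub>R L\<^esub> j)"

definition principal where
  "principal L = (if sg L then {x. in_principal L x} else {})"

lemma in_principal_closed: "in_principal L x \<Longrightarrow> sg L \<Longrightarrow> x \<in> carrier (R L)"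
proof (induction rule: in_principal.induct)
  case (zero L)
  then show ?case using cring.cring_simprules(2)[OF cring_lev] by blast
next
  case (step L' L m j)
  then show ?case
    using tr_closed[OF step.prems step.hyps(1,2) gen_multiples_closed[OF step.hyps(1,3)]]
    by (simp add: cring.cring_simprules(1)[OF cring_lev])
qed

lemma in_principal_add: "in_principal L x \<Longrightarrow> sg L \<Longrightarrow> in_principal L y \<Longrightarrow> in_principal L (x \<oplus>\<^bsub>R L\<^esub> y)"
proof (induction rule: in_principal.induct)
  case (zero L)
  interpret RL: cring "R L" by (rule cring_lev[OF zero.prems(1)])
  show ?case using in_principal_closed[OF zero.prems(2,1)] zero.prems(2) by simp
next
  case (step L' L m j)
  interpret RL: cring "R L" by (rule cring_lev[OF step.prems(1)])
  have "tr T L' L m \<oplus>\<^bsub>R L\<^esub> j \<oplus>\<^bsub>R L\<^esub> y = tr T L' L m \<oplus>\<^bsub>R L\<^esub> (j \<oplus>\<^bsub>R L\<^esub> y)"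
    using tr_closed[OF step.prems(1) step.hyps(1,2) gen_multiples_closed[OF step.hyps(1,3)]]
      in_principal_closed[OF step.hyps(4) step.prems(1)] in_principal_closed[OF step.prems(2,1)]
    by (simp add: RL.a_assoc)
  then show ?case using in_principal.step[OF step.hyps(1-3) step.IH[OF step.prems]] by simp
qed

lemma in_principal_tr_gen_multiples:
  assumes L: "sg L" and L': "sg L'" "L' \<subseteq> L" and m: "m \<in> gen_multiples L'"
  shows "in_principal L (tr T L' L m)"
proof -
  interpret RL: cring "R L" by (rule cring_lev[OF L])
  have "tr T L' L m = tr T L' L m \<oplus>\<^bsub>R L\<^esub> \<zero>\<^bsub>R L\<^esub>"
    using tr_closed[OF L L' gen_multiples_closed[OF L'(1) m]] by simp
  then show ?thesis using in_principal.step[OF L' m in_principal.zero] by simp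
qed

lemma in_principal_gen_multiples: "sg L \<Longrightarrow> m \<in> gen_multiples L \<Longrightarrow> in_principal L m"
  using in_principal_tr_gen_multiples[OF _ _ subset_refl] tr_id gen_multiples_closed by metis

lemma in_principal_mult:
  "in_principal L x \<Longrightarrow> sg L \<Longrightarrow> c \<in> carrier (R L) \<Longrightarrow> in_principal L (c \<otimes>\<^bsub>R L\<^esub> x)"
proof (induction rule: in_principal.induct)
  case (zero L)
  interpret RL: cring "R L" by (rule cring_lev[OF zero.prems(1)])
  show ?case using zero.prems(2) in_principal.zero[of L] by simp
next
  case (step L' L m j)
  note L = step.prems(1) and c = step.prems(2)
  interpret RL: cring "R L" by (rule cring_lev[OF L])
  have mc: "m \<in> carrier (R L')" by (rule gen_multiples_closed[OF step.hyps(1,3)])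
  have "c \<otimes>\<^bsub>R L\<^esub> (tr T L' L m \<oplus>\<^bsub>R L\<^esub> j) = tr T L' L m \<otimes>\<^bsub>R L\<^esub> c \<oplus>\<^bsub>R L\<^esub> c \<otimes>\<^bsub>R L\<^esub> j"
    using tr_closed[OF L step.hyps(1,2) mc] in_principal_closed[OF step.hyps(4) L] c
    by (simp add: RL.r_distr RL.m_comm)
  also have "tr T L' L m \<otimes>\<^bsub>R L\<^esub> c = tr T L' L (m \<otimes>\<^bsub>R L'\<^esub> res T L' L c)"
    by (rule tr_mult_frobenius[OF L step.hyps(1,2) mc c])
  finally show ?case
    using in_principal.step[OF step.hyps(1,2) _ step.IH[OF L c]]
      gen_multiples_mult(2)[OF step.hyps(1) res_closed[OF L step.hyps(1,2) c] step.hyps(3)]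
    by simp
qed

lemma ideal_principal: "sg L \<Longrightarrow> ideal (principal L) (R L)"
  unfolding principal_def
  by (auto intro!: cring.idealI_comm[OF cring_lev] in_principal.zero
      intro: in_principal_closed in_principal_add in_principal_mult)

lemma in_principal_tr: "in_principal K x \<Longrightarrow> sg K \<Longrightarrow> sg L \<Longrightarrow> K \<subseteq> L \<Longrightarrow> in_principal L (tr T K L x)"
proof (induction rule: in_principal.induct)
  case (zero K)
  show ?case using tr_zero[OF zero.prems(2,1,3)] in_principal.zero[of L] by simp
next
  case (step L' K m j)
  note K = step.prems(1) and L = step.prems(2) and KL = step.prems(3)
  have mc: "m \<in> carrier (R L')" by (rule gen_multiples_closed[OF step.hyps(1,3)])
  have "tr T K L (tr T L' K m \<oplus>\<^bsub>R K\<^esub> j) = tr T K L (tr T L' K m) \<oplus>\<^bsub>R L\<^esub> tr T K L j"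
    by (rule tr_add[OF L K KL tr_closed[OF K step.hyps(1,2) mc] in_principal_closed[OF step.hyps(4) K]])
  also have "tr T K L (tr T L' K m) = tr T L' L m" by (rule tr_tr[OF L K step.hyps(1,2) KL mc])
  finally show ?case
    using in_principal.step[OF step.hyps(1) _ step.hyps(3) step.IH[OF K L KL]]
      step.hyps(2) KL by auto
qed

lemma in_principal_cj:
  "in_principal L x \<Longrightarrow> sg L \<Longrightarrow> k \<in> carrier G \<Longrightarrow> in_principal (conjg G k L) (cj T k L x)"
proof (induction rule: in_principal.induct)
  case (zero L)
  show ?case using cj_zero[OF zero.prems(2,1)] in_principal.zero by simp
next
  case (step L' L m j)
  note L = step.prems(1) and k = step.prems(2)
  have mc: "m \<in> carrier (R L')" by (rule gen_multiples_closed[OF step.hyps(1,3)])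
  have "cj T k L (tr T L' L m \<oplus>\<^bsub>R L\<^esub> j) = cj T k L (tr T L' L m) \<oplus>\<^bsub>R (conjg G k L)\<^esub> cj T k L j"
    by (rule cj_add[OF k L tr_closed[OF L step.hyps(1,2) mc] in_principal_closed[OF step.hyps(4) L]])
  also have "cj T k L (tr T L' L m) = tr T (conjg G k L') (conjg G k L) (cj T k L' m)"
    by (rule cj_tr[OF k L step.hyps(1,2) mc])
  finally show ?case
    using in_principal.step[OF subgroup_conjg[OF k step.hyps(1)] conjg_mono[OF step.hyps(2)]
        cj_gen_multiples[OF k step.hyps(1,3)] step.IH[OF L k]]
    by simp
qed

lemma in_principal_finsum:
  "sg L \<Longrightarrow> (\<And>x. x \<in> A \<Longrightarrow> in_principal L (f x)) \<Longrightarrow> in_principal L (finsum (R L) f A)"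
  using ring.ideal_finsum_closed[OF cring.axioms(1)[OF cring_lev] ideal_principal, of L A f]
  unfolding principal_def by simp

lemma in_principal_finprod:
  assumes L: "sg L" and A: "finite A" "A \<noteq> {}" and f: "\<And>x. x \<in> A \<Longrightarrow> in_principal L (f x)"
  shows "in_principal L (finprod (R L) f A)"
proof -
  obtain x where "x \<in> A" using A(2) by blast
  then show ?thesis
    using cring.ideal_finprod_closed[OF cring_lev[OF L] ideal_principal[OF L] A(1), of x f]
      f in_principal_closed[OF _ L] unfolding principal_def by (simp add: L Pi_iff)
qed

lemma in_principal_res:
  "in_principal L x \<Longrightarrow> sg L \<Longrightarrow> sg L2 \<Longrightarrow> L2 \<subseteq> L \<Longrightarrow> in_principal L2 (res T L2 L x)"
proof (induction rule: in_principal.induct)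
  case (zero L)
  show ?case using res_zero[OF zero.prems] in_principal.zero by simp
next
  case (step L' L m j)
  note L = step.prems(1) and L2 = step.prems(2) and L2L = step.prems(3)
  have mc: "m \<in> carrier (R L')" by (rule gen_multiples_closed[OF step.hyps(1,3)])
  have "in_principal L2 (res T L2 L (tr T L' L m))"
    unfolding res_tr_double_coset[OF L step.hyps(1) L2 step.hyps(2) L2L mc]
  proof (rule in_principal_finsum[OF L2])
    fix D assume D: "D \<in> dcosets G L L2 L'"
    note dd = dcosets_summand_data[OF L L2 step.hyps(1) D]
    let ?h = "dcrep G L L2 L' D" and ?K' = "conjg G (inv (dcrep G L L2 L' D)) L2 \<inter> L'"
    have "cj T ?h ?K' (res T ?K' L' m) \<in> gen_multiples (L2 \<inter> conjg G ?h L')"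
      using cj_gen_multiples[OF dd(1,2) res_gen_multiples[OF step.hyps(1) dd(2,3) step.hyps(3)]] dd(6)
      by simp
    then show "in_principal L2 (let h = ?h; K' = conjg G (inv h) L2 \<inter> L' in
        tr T (L2 \<inter> conjg G h L') L2 (cj T h K' (res T K' L' m)))"
      unfolding Let_def by (rule in_principal_tr_gen_multiples[OF L2 dd(4,5)])
  qed
  then show ?case
    using in_principal_add[OF _ L2 step.IH[OF step.prems]]
      res_add[OF L L2 L2L tr_closed[OF L step.hyps(1,2) mc] in_principal_closed[OF step.hyps(4) L]]
    by simp
qed

text \<open>One factor in the summand of \<open>nm (tr m)\<close> (Tambara reciprocity) belonging to a section \<open>s\<close>.\<close>
lemma in_principal_nm_tr_factor:
  fixes s :: "'a set \<Rightarrow> 'a set"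
  assumes H: "sg H" and K: "sg K" and L: "sg L" and m: "m \<in> gen_multiples L"
    and sc: "\<And>x. x \<in> cosets_in G H K \<Longrightarrow> s x \<subseteq> carrier G"
    and h: "h \<in> H" and h': "h' \<in> H" "s (h <# K) = h' <# L"
  defines "M \<equiv> sec_stab G H K s"
  shows "in_principal M (nm T (M \<inter> conjg G h K) M (res T (M \<inter> conjg G h K) (conjg G h' L) (cj T h' L m)))"
proof -
  have M: "sg M" "M \<subseteq> H" unfolding M_def
    by (rule subgroup_sec_stab[OF H subgroup.subset[OF K] sc]) (auto simp: sec_stab_def)
  have h'c: "h' \<in> carrier G" using h' subgroup.subset[OF H] by blast
  define X where "X = M \<inter> conjg G h K"
  have X: "sg X" "X \<subseteq> M"
    unfolding X_def using subgroups_Inter_pair[OF M(1) subgroup_conjg[OF _ K]] h subgroup.subset[OF H]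
    by auto
  have "X \<subseteq> conjg G h' L" unfolding X_def M_def by (rule sec_stab_Int_conjg_subset[where s = s, OF H K L sc h h'])
  then have "res T X (conjg G h' L) (cj T h' L m) \<in> gen_multiples X"
    by (rule res_gen_multiples[OF subgroup_conjg[OF h'c L] X(1) _ cj_gen_multiples[OF h'c L m]])
  then show ?thesis unfolding X_def[symmetric]
    by (rule in_principal_gen_multiples[OF M(1) nm_gen_multiples[OF X(1) M(1) X(2)]])
qed

lemma in_principal_nm_tr:
  assumes H: "sg H" and K: "sg K" and L: "sg L" and LK: "L \<subseteq> K" and KH: "K \<subseteq> H"
    and m: "m \<in> gen_multiples L"
  shows "in_principal H (nm T K H (tr T L K m))"
  unfolding nm_tr_reciprocity[OF H K L LK KH gen_multiples_closed[OF L m]]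
proof (rule in_principal_finsum[OF H])
  fix Ob assume Ob: "Ob \<in> sec_orbits G H K L"
  define s where "s = (SOME s. s \<in> Ob)"
  have s: "\<exists>h'\<in>H. s x = h' <# L" if "x \<in> cosets_in G H K" for x
    unfolding s_def by (rule sec_orbits_some_value[OF H subgroup.subset[OF K] L Ob that])
  then have sc: "s x \<subseteq> carrier G" if "x \<in> cosets_in G H K" for x
    using that l_coset_subset_G[OF subgroup.subset[OF L]] subgroup.subset[OF H] by blast
  define M where "M = sec_stab G H K s"
  have M: "sg M" "M \<subseteq> H" unfolding M_def
    by (rule subgroup_sec_stab[OF H subgroup.subset[OF K] sc]) (auto simp: sec_stab_def)
  define f where "f = (\<lambda>D. let h = dcrep G H M K D; h' = (SOME h'. h' \<in> H \<and> s (h <# K) = h' <# L) in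
    nm T (M \<inter> conjg G h K) M (res T (M \<inter> conjg G h K) (conjg G h' L) (cj T h' L m)))"
  have "in_principal M (f D)" if D: "D \<in> dcosets G H M K" for D
  proof -
    have h: "dcrep G H M K D \<in> H" by (rule dcrep_mem[OF D])
    then have "\<exists>h'. h' \<in> H \<and> s (dcrep G H M K D <# K) = h' <# L" using s[OF lcos_mem_cosets_in] by blast
    then have "(SOME h'. h' \<in> H \<and> s (dcrep G H M K D <# K) = h' <# L) \<in> H \<and>
        s (dcrep G H M K D <# K) = (SOME h'. h' \<in> H \<and> s (dcrep G H M K D <# K) = h' <# L) <# L"
      by (rule someI_ex)
    note h' = conjunct1[OF this] conjunct2[OF this]
    show ?thesis
      unfolding f_def Let_def by (rule in_principal_nm_tr_factor[where s = s, OF H K L m sc h h', folded M_def])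
  qed
  then have "in_principal M (finprod (R M) f (dcosets G H M K))"
    by (intro in_principal_finprod[OF M(1) finite_dcosets[OF finite_subgroup[OF H]]
          dcosets_nonempty]) (use subgroup.one_closed[OF H] in auto)
  then show "in_principal H (let s = SOME s. s \<in> Ob; M = sec_stab G H K s in
      tr T M H (finprod (R M) (\<lambda>D. let h = dcrep G H M K D; h' = SOME h'. h' \<in> H \<and> s (h <# K) = h' <# L in
        nm T (M \<inter> conjg G h K) M (res T (M \<inter> conjg G h K) (conjg G h' L) (cj T h' L m))) (dcosets G H M K)))"
    unfolding f_def Let_def s_def[symmetric] M_def[symmetric] by (rule in_principal_tr[OF _ M(1) H M(2)])
qed

text \<open>One summand of the norm of a sum \<open>x + y\<close> (Tambara reciprocity): it is a transfer from the
  stabiliser \<open>M\<close> of an orbit; for \<open>M = H\<close> it is \<open>nm x\<close> or \<open>nm y\<close>, otherwise it only involves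
  norms to the proper subgroup \<open>M\<close>.\<close>
lemma in_principal_nm_add_summand:
  fixes s :: "'a set \<Rightarrow> bool"
  assumes H: "sg H" and K: "sg K" and KH: "K \<subseteq> H"
    and xy: "in_principal K x" "in_principal K y"
    and nm_xy: "in_principal H (nm T K H x)" "in_principal H (nm T K H y)"
    and IH: "\<And>M K' z. sg M \<Longrightarrow> M \<subset> H \<Longrightarrow> sg K' \<Longrightarrow> K' \<subseteq> M \<Longrightarrow> in_principal K' z \<Longrightarrow>
      in_principal M (nm T K' M z)"
  defines "M \<equiv> bool_stab G H K s"
  shows "in_principal H (tr T M H (finprod (R M)
      (\<lambda>D. let h = dcrep G H M K D; K' = conjg G (inv h) M \<inter> K in
        nm T (M \<inter> conjg G h K) M (cj T h K' (res T K' K (if s (h <# K) then x else y))))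
      (dcosets G H M K)))" (is "in_principal H (tr T M H ?P)")
proof -
  have M: "sg M" "M \<subseteq> H" unfolding M_def
    by (rule subgroup_bool_stab[OF H subgroup.subset[OF K]]) (auto simp: bool_stab_def)
  have z: "in_principal K (if c then x else y)" for c using xy by simp
  show ?thesis
  proof (cases "M = H")
    case True
    have "?P = nm T K H (if s (dcrep G H H K H <# K) then x else y)"
      unfolding True by (rule nm_dcosets_self[OF H K KH]) (use in_principal_closed[OF z K] in simp)
    then show ?thesis using nm_xy tr_id[OF H] nm_closed[OF H K KH] in_principal_closed[OF xy(1) K]
        in_principal_closed[OF xy(2) K] True by auto
  next
    case False
    then have MH: "M \<subset> H" using M(2) by blast
    have "in_principal M ?P"
    proof (rule in_principal_finprod[OF M(1) finite_dcosets[OF finite_subgroup[OF H]] dcosets_nonempty])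
      show "H \<noteq> {}" using subgroup.one_closed[OF H] by blast
      fix D assume D: "D \<in> dcosets G H M K"
      note dd = dcosets_summand_data[OF H M(1) K D]
      let ?h = "dcrep G H M K D" and ?K' = "conjg G (inv (dcrep G H M K D)) M \<inter> K"
      have "in_principal (M \<inter> conjg G ?h K) (cj T ?h ?K' (res T ?K' K (if s (?h <# K) then x else y)))"
        using in_principal_cj[OF in_principal_res[OF z K dd(2,3)] dd(2,1)] dd(6) by simp
      then show "in_principal M (let h = ?h; K' = conjg G (inv h) M \<inter> K in
          nm T (M \<inter> conjg G h K) M (cj T h K' (res T K' K (if s (h <# K) then x else y))))"
        unfolding Let_def by (rule IH[OF M(1) MH dd(4,5)])
    qed
    then show ?thesis by (rule in_principal_tr[OF _ M(1) H M(2)])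
  qed
qed

lemma in_principal_nm:
  assumes "sg H" "sg K" "K \<subseteq> H" "in_principal K x"
  shows "in_principal H (nm T K H x)"
  using assms
proof (induction "card H" arbitrary: H K x rule: less_induct)
  case less
  note H = less.prems(1)
  have IH: "in_principal M (nm T K' M z)"
    if "sg M" "M \<subset> H" "sg K'" "K' \<subseteq> M" "in_principal K' z" for M K' z
    using less.hyps[OF psubset_card_mono[OF finite_subgroup[OF H] that(2)] that(1,3-5)] .
  from less.prems(4,2,3) show ?case
  proof (induction rule: in_principal.induct)
    case (zero K)
    show ?case using nm_zero[OF H zero.prems] in_principal.zero by simp
  next
    case (step L K m j)
    note K = step.prems(1) and KH = step.prems(2)
    have t: "in_principal K (tr T L K m)" by (rule in_principal_tr_gen_multiples[OF K step.hyps(1-3)])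
    show ?case
      unfolding nm_add_reciprocity[OF H K KH in_principal_closed[OF t K] in_principal_closed[OF step.hyps(4) K]]
      unfolding Let_def
      by (intro in_principal_finsum[OF H] in_principal_nm_add_summand[OF H K KH t step.hyps(4) _ _ IH,
            unfolded Let_def] in_principal_nm_tr[OF H K step.hyps(1,2) KH step.hyps(3)] step.IH[OF K KH])
  qed
qed

lemma tambara_ideal_principal: "tambara_ideal G T principal"
proof (rule tambara_idealI)
  show "principal H = {}" if "\<not> sg H" for H using that unfolding principal_def by simp
  show "ideal (principal H) (R H)" if "sg H" for H by (rule ideal_principal[OF that])
qed (auto simp: principal_def subgroup_conjg
      intro: in_principal_res in_principal_tr in_principal_nm in_principal_cj)

lemma a_mem_principal: "a \<in> principal H0"
  unfolding principal_def
  using H0 in_principal_gen_multiples[OF H0] norm_gens_subset_gen_multiples[OF H0] a_mem_norm_gens by auto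

lemma norm_gens_subset_tambara_ideal:
  assumes I: "tambara_ideal G T I" and aI: "a \<in> I H0" and L: "sg L"
  shows "norm_gens L \<subseteq> I L"
proof
  fix u assume "u \<in> norm_gens L"
  then obtain L' g H' where *: "sg L'" "L' \<subseteq> L" "sg H'" "H' \<subseteq> H0" "g \<in> carrier G"
    "conjg G g H' = L'" "u = nm T L' L (cj T g H' (res T H' H0 a))" by (rule norm_gensE)
  have "cj T g H' (res T H' H0 a) \<in> I L'"
    using tambara_ideal_cj[OF I *(5,3) tambara_ideal_res[OF I H0 *(3,4) aI]] *(6) by simp
  then show "u \<in> I L" unfolding *(7) by (rule tambara_ideal_nm[OF I L *(1,2)])
qed

end

section \<open>Products of principal Tambara ideals\<close>

locale principal_pair = finite_tambara +
  A: principal_tambara G T H0 a + B: principal_tambara G T K0 b for H0 a K0 b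
begin

context
  fixes Q assumes Q: "tambara_ideal G T Q"
    and gens_mult: "\<And>L u v. sg L \<Longrightarrow> u \<in> A.norm_gens L \<Longrightarrow> v \<in> B.norm_gens L \<Longrightarrow> u \<otimes>\<^bsub>R L\<^esub> v \<in> Q L"
begin

lemma gen_multiples_mult:
  assumes L: "sg L" and m: "m \<in> A.gen_multiples L" and n: "n \<in> B.gen_multiples L"
  shows "m \<otimes>\<^bsub>R L\<^esub> n \<in> Q L"
proof -
  interpret RL: cring "R L" by (rule cring_lev[OF L])
  obtain r u where ru: "r \<in> carrier (R L)" "u \<in> A.norm_gens L" "m = r \<otimes>\<^bsub>R L\<^esub> u"
    using m by (rule A.gen_multiplesE)
  obtain r' v where rv: "r' \<in> carrier (R L)" "v \<in> B.norm_gens L" "n = r' \<otimes>\<^bsub>R L\<^esub> v"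
    using n by (rule B.gen_multiplesE)
  have "m \<otimes>\<^bsub>R L\<^esub> n = (r \<otimes>\<^bsub>R L\<^esub> r') \<otimes>\<^bsub>R L\<^esub> (u \<otimes>\<^bsub>R L\<^esub> v)"
    using ru rv A.norm_gens_closed[OF L ru(2)] B.norm_gens_closed[OF L rv(2)] by (simp add: RL.m_ac)
  then show ?thesis using tambara_ideal_mult[OF Q gens_mult[OF L ru(2) rv(2)]] ru(1) rv(1) by simp
qed

lemma gen_multiples_mult_in_principal:
  "B.in_principal L j \<Longrightarrow> sg L \<Longrightarrow> m \<in> A.gen_multiples L \<Longrightarrow> m \<otimes>\<^bsub>R L\<^esub> j \<in> Q L"
proof (induction arbitrary: m rule: B.in_principal.induct)
  case (zero L)
  interpret RL: cring "R L" by (rule cring_lev[OF zero.prems(1)])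
  show ?case using A.gen_multiples_closed[OF zero.prems] tambara_ideal_zero[OF Q zero.prems(1)] by simp
next
  case (step L' L n j)
  note L = step.prems(1) and m = step.prems(2)
  interpret RL: cring "R L" by (rule cring_lev[OF L])
  interpret RL': cring "R L'" by (rule cring_lev[OF step.hyps(1)])
  have nc: "n \<in> carrier (R L')" by (rule B.gen_multiples_closed[OF step.hyps(1,3)])
  have mc: "m \<in> carrier (R L)" by (rule A.gen_multiples_closed[OF L m])
  have rm: "res T L' L m \<in> A.gen_multiples L'" by (rule A.res_gen_multiples[OF L step.hyps(1,2) m])
  have "m \<otimes>\<^bsub>R L\<^esub> (tr T L' L n \<oplus>\<^bsub>R L\<^esub> j) = tr T L' L n \<otimes>\<^bsub>R L\<^esub> m \<oplus>\<^bsub>R L\<^esub> m \<otimes>\<^bsub>R L\<^esub> j"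
    using tr_closed[OF L step.hyps(1,2) nc] B.in_principal_closed[OF step.hyps(4) L] mc
    by (simp add: RL.r_distr RL.m_comm)
  also have "tr T L' L n \<otimes>\<^bsub>R L\<^esub> m = tr T L' L (res T L' L m \<otimes>\<^bsub>R L'\<^esub> n)"
    using tr_mult_frobenius[OF L step.hyps(1,2) nc mc] nc A.gen_multiples_closed[OF step.hyps(1) rm]
    by (simp add: RL'.m_comm)
  finally show ?case
    using tambara_ideal_add[OF Q tambara_ideal_tr[OF Q L step.hyps(1,2)
        gen_multiples_mult[OF step.hyps(1) rm step.hyps(3)]] step.IH[OF L m]] by simp
qed

lemma in_principal_mult_in_principal:
  "A.in_principal L i \<Longrightarrow> sg L \<Longrightarrow> B.in_principal L j \<Longrightarrow> i \<otimes>\<^bsub>R L\<^esub> j \<in> Q L"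
proof (induction arbitrary: j rule: A.in_principal.induct)
  case (zero L)
  interpret RL: cring "R L" by (rule cring_lev[OF zero.prems(1)])
  show ?case using B.in_principal_closed[OF zero.prems(2,1)] tambara_ideal_zero[OF Q zero.prems(1)] by simp
next
  case (step L' L m i)
  note L = step.prems(1) and j = step.prems(2)
  interpret RL: cring "R L" by (rule cring_lev[OF L])
  have mc: "m \<in> carrier (R L')" by (rule A.gen_multiples_closed[OF step.hyps(1,3)])
  have jc: "j \<in> carrier (R L)" by (rule B.in_principal_closed[OF j L])
  have "(tr T L' L m \<oplus>\<^bsub>R L\<^esub> i) \<otimes>\<^bsub>R L\<^esub> j = tr T L' L m \<otimes>\<^bsub>R L\<^esub> j \<oplus>\<^bsub>R L\<^esub> i \<otimes>\<^bsub>R L\<^esub> j"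
    using tr_closed[OF L step.hyps(1,2) mc] A.in_principal_closed[OF step.hyps(4) L] jc
    by (simp add: RL.l_distr)
  also have "tr T L' L m \<otimes>\<^bsub>R L\<^esub> j = tr T L' L (m \<otimes>\<^bsub>R L'\<^esub> res T L' L j)"
    by (rule tr_mult_frobenius[OF L step.hyps(1,2) mc jc])
  finally show ?case
    using tambara_ideal_add[OF Q tambara_ideal_tr[OF Q L step.hyps(1,2) gen_multiples_mult_in_principal[OF
          B.in_principal_res[OF j L step.hyps(1,2)] step.hyps(1,3)]] step.IH[OF L j]] by simp
qed

lemma principal_prod_subset: "tambara_sub (tambara_prod G T A.principal B.principal) Q"
proof (rule tambara_sub_prod[OF Q])
  fix L assume L: "sg L"
  show "ideal_prod (R L) (A.principal L) (B.principal L) \<subseteq> Q L"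
  proof
    fix x assume "x \<in> ideal_prod (R L) (A.principal L) (B.principal L)"
    then show "x \<in> Q L"
    proof (induction rule: ideal_prod.induct)
      case (prod i j)
      then show ?case using in_principal_mult_in_principal L unfolding A.principal_def B.principal_def by simp
    next
      case (sum s1 s2)
      then show ?case by (intro tambara_ideal_add[OF Q]) simp_all
    qed
  qed
qed

end

definition prod_gens where
  "prod_gens = (\<lambda>(L, u, v). (L, u \<otimes>\<^bsub>R L\<^esub> v)) ` (SIGMA L:{L. sg L}. A.norm_gens L \<times> B.norm_gens L)"

lemma finite_prod_gens: "finite prod_gens"
  unfolding prod_gens_def
  using finite_subgroups A.finite_norm_gens B.finite_norm_gens by (simp add: finite_SigmaI)

lemma prod_gens_subset_tambara_prod:
  assumes I: "tambara_ideal G T I" and J: "tambara_ideal G T J" and a: "a \<in> I H0" and b: "b \<in> J K0"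
  shows "prod_gens \<subseteq> Sigma UNIV (tambara_prod G T I J)"
proof
  fix p assume "p \<in> prod_gens"
  then obtain L u v where p: "p = (L, u \<otimes>\<^bsub>R L\<^esub> v)" "sg L" "u \<in> A.norm_gens L" "v \<in> B.norm_gens L"
    unfolding prod_gens_def by auto
  have "u \<in> I L" "v \<in> J L"
    using A.norm_gens_subset_tambara_ideal[OF I a p(2)] B.norm_gens_subset_tambara_ideal[OF J b p(2)]
      p(3,4) by auto
  then have "u \<otimes>\<^bsub>R L\<^esub> v \<in> ideal_prod (R L) (I L) (J L)" by (rule ideal_prod.prod)
  then show "p \<in> Sigma UNIV (tambara_prod G T I J)"
    using ideal_prod_subset_tambara_prod[OF p(2)] p(1) by auto
qed

lemma prime_prod_gens:
  assumes P: "tambara_prime G T P" and sub: "prod_gens \<subseteq> Sigma UNIV P"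
  shows "a \<in> P H0 \<or> b \<in> P K0"
proof -
  have "u \<otimes>\<^bsub>R L\<^esub> v \<in> P L" if "sg L" "u \<in> A.norm_gens L" "v \<in> B.norm_gens L" for L u v
  proof -
    have "(L, u \<otimes>\<^bsub>R L\<^esub> v) \<in> prod_gens"
      unfolding prod_gens_def using that by (intro rev_image_eqI[of "(L, u, v)"]) auto
    then show ?thesis using sub by blast
  qed
  then have "tambara_sub (tambara_prod G T A.principal B.principal) P"
    by (rule principal_prod_subset[OF tambara_prime_ideal[OF P]])
  then have "tambara_sub A.principal P \<or> tambara_sub B.principal P"
    by (rule tambara_primeD[OF P A.tambara_ideal_principal B.tambara_ideal_principal])
  then show ?thesis using A.a_mem_principal B.a_mem_principal unfolding tambara_sub_def by blast
qed

end

lemma (in finite_tambara) prime_product_witness: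
  assumes H0: "sg H0" "a \<in> carrier (R H0)" and K0: "sg K0" "b \<in> carrier (R K0)"
  obtains F where "finite F"
    "\<And>I J. tambara_ideal G T I \<Longrightarrow> tambara_ideal G T J \<Longrightarrow> a \<in> I H0 \<Longrightarrow> b \<in> J K0 \<Longrightarrow>
      F \<subseteq> Sigma UNIV (tambara_prod G T I J)"
    "\<And>P. tambara_prime G T P \<Longrightarrow> F \<subseteq> Sigma UNIV P \<Longrightarrow> a \<in> P H0 \<or> b \<in> P K0"
proof -
  interpret principal_pair G T H0 a K0 b
    by (intro principal_pair.intro principal_tambara.intro principal_tambara_axioms.intro
        finite_tambara_axioms assms)
  show ?thesis using that finite_prod_gens prod_gens_subset_tambara_prod prime_prod_gens by blast
qed

section \<open>The Nakaoka spectrum\<close>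

lemma subtopology_topology_generated_by:
  assumes U: "U \<subseteq> \<Union>\<B>"
  shows "topology (arbitrary union_of (finite intersection_of (\<lambda>x. x \<in> \<B>) relative_to U)) =
    subtopology (topology_generated_by \<B>) U"
proof -
  have "topology (arbitrary union_of (finite intersection_of (\<lambda>x. x \<in> \<B>) relative_to U)) =
      topology (arbitrary union_of (finite' intersection_of (\<lambda>x. x \<in> \<B>) relative_to U))"
  proof (rule topology_bases_eq)
    fix V x assume V: "(finite intersection_of (\<lambda>x. x \<in> \<B>) relative_to U) V" and x: "x \<in> V"
    then obtain \<F> where \<F>: "finite \<F>" "\<F> \<subseteq> \<B>" "V = U \<inter> \<Inter>\<F>"
      unfolding relative_to_def intersection_of_def by auto
    show "\<exists>W. (finite' intersection_of (\<lambda>x. x \<in> \<B>) relative_to U) W \<and> x \<in> W \<and> W \<subseteq> V"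
    proof (cases "\<F> = {}")
      case True
      then obtain B where "B \<in> \<B>" "x \<in> B" using x \<F>(3) U by auto
      then have "(finite' intersection_of (\<lambda>x. x \<in> \<B>) relative_to U) (U \<inter> B)"
        unfolding relative_to_def intersection_of_def by (intro exI[of _ B] conjI exI[of _ "{B}"]) auto
      then show ?thesis using x True \<F>(3) \<open>x \<in> B\<close> by (intro exI[of _ "U \<inter> B"]) auto
    next
      case False
      then show ?thesis using x \<F> by (intro exI[of _ V]) (auto simp: relative_to_def intersection_of_def)
    qed
  next
    fix V x assume "(finite' intersection_of (\<lambda>x. x \<in> \<B>) relative_to U) V" "x \<in> V"
    moreover have "(finite' intersection_of (\<lambda>x. x \<in> \<B>) relative_to U) V \<Longrightarrow>
        (finite intersection_of (\<lambda>x. x \<in> \<B>) relative_to U) V"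
      unfolding relative_to_def intersection_of_def by blast
    ultimately show "\<exists>W. (finite intersection_of (\<lambda>x. x \<in> \<B>) relative_to U) W \<and> x \<in> W \<and> W \<subseteq> V"
      by blast
  qed
  also have "\<dots> = subtopology (topology_generated_by \<B>) U"
  proof -
    have "openin (topology_generated_by \<B>) = arbitrary union_of finite' intersection_of (\<lambda>x. x \<in> \<B>)"
      unfolding generate_topology_on_eq[symmetric] using openin_topology_generated_by_iff by blast
    then have "(\<lambda>T. \<exists>S. T = S \<inter> U \<and> openin (topology_generated_by \<B>) S) =
        (arbitrary union_of finite' intersection_of (\<lambda>x. x \<in> \<B>)) relative_to U"
      unfolding relative_to_def by (auto simp: fun_eq_iff)
    then show ?thesis by (simp add: subtopology_def arbitrary_union_of_relative_to)
  qed
  finally show ?thesis .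
qed

lemma irreducible_closed_subset_Union:
  assumes Z: "irreducible_closed X Z" and fin: "finite \<C>" and closed: "\<And>C. C \<in> \<C> \<Longrightarrow> closedin X C"
    and cover: "Z \<subseteq> \<Union>\<C>"
  shows "\<exists>C\<in>\<C>. Z \<subseteq> C"
  using fin closed cover
proof (induction \<C> rule: finite_induct)
  case empty
  then show ?case using Z unfolding irreducible_closed_def by simp
next
  case (insert C \<C>)
  then have "Z \<subseteq> C \<or> Z \<subseteq> \<Union>\<C>"
    using Z closedin_Union[of \<C> X] unfolding irreducible_closed_def by (metis Union_insert insertCI)
  then show ?case using insert.IH insert.prems by blast
qed

context finite_tambara
begin

abbreviation "Spec \<equiv> nak_spec G T"
abbreviation "Nak \<equiv> nak_topology G T"

definition level_elems where
  "level_elems = (SIGMA H:{H. sg H}. carrier (R H))"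

text \<open>A family \<open>P\<close> of subsets of the levels is identified with its graph \<open>Sigma UNIV P\<close>, the
  pairs \<open>(H, x)\<close> with \<open>x \<in> P H\<close>; \<open>basic_open E\<close> is the intersection of the complements of
  the \<open>V\<^sub>H(x)\<close> with \<open>(H, x) \<in> E\<close>.\<close>
definition basic_open where
  "basic_open E = {P \<in> Spec. Sigma UNIV P \<inter> E = {}}"

lemma nak_spec_prime: "P \<in> Spec \<Longrightarrow> tambara_prime G T P"
  unfolding nak_spec_def by simp

lemma basic_open_subset: "basic_open E \<subseteq> Spec"
  unfolding basic_open_def by blast

lemma basic_open_empty: "basic_open {} = Spec"
  unfolding basic_open_def by simp

lemma basic_open_Un: "basic_open (E1 \<union> E2) = basic_open E1 \<inter> basic_open E2"
  unfolding basic_open_def by blast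

lemma basic_open_singleton: "basic_open {(H, x)} = Spec - nak_V G T H x"
  unfolding basic_open_def nak_V_def by auto

lemma nak_topology_eq:
  "Nak = topology_generated_by (insert Spec ((\<lambda>p. basic_open {p}) ` level_elems))"
proof -
  have "{Spec - nak_V G T H x | H x. sg H \<and> x \<in> carrier (R H)} = (\<lambda>p. basic_open {p}) ` level_elems"
    unfolding level_elems_def by (auto simp: basic_open_singleton image_iff Bex_def) blast+
  then show ?thesis unfolding nak_topology_def by simp
qed

lemma topspace_nak: "topspace Nak = Spec"
  unfolding nak_topology_eq topology_generated_by_topspace using basic_open_subset by blast

lemma openin_basic_open: "finite E \<Longrightarrow> E \<subseteq> level_elems \<Longrightarrow> openin Nak (basic_open E)"
proof (induction E rule: finite_induct)
  case empty
  show ?case unfolding basic_open_empty nak_topology_eq by (rule topology_generated_by_Basis) simp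
next
  case (insert p E)
  have "openin Nak (basic_open {p})"
    unfolding nak_topology_eq by (rule topology_generated_by_Basis) (use insert.prems in blast)
  then show ?case using insert basic_open_Un[of "{p}" E] by (simp add: openin_Int)
qed

lemma nak_open_basis:
  assumes "openin Nak W" and "P \<in> W"
  shows "\<exists>E. finite E \<and> E \<subseteq> level_elems \<and> P \<in> basic_open E \<and> basic_open E \<subseteq> W"
proof -
  have "generate_topology_on (insert Spec ((\<lambda>p. basic_open {p}) ` level_elems)) W"
    using assms(1) unfolding nak_topology_eq openin_topology_generated_by_iff .
  then show ?thesis using assms(2)
  proof (induction arbitrary: P rule: generate_topology_on.induct)
    case (Int A B)
    obtain E1 where "finite E1" "E1 \<subseteq> level_elems" "P \<in> basic_open E1" "basic_open E1 \<subseteq> A"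
      using Int.IH(1) Int.prems by blast
    moreover obtain E2 where "finite E2" "E2 \<subseteq> level_elems" "P \<in> basic_open E2" "basic_open E2 \<subseteq> B"
      using Int.IH(2) Int.prems by blast
    ultimately show ?case by (intro exI[of _ "E1 \<union> E2"]) (auto simp: basic_open_Un)
  next
    case (UN K)
    then obtain k where k: "k \<in> K" "P \<in> k" by blast
    have "\<exists>E. finite E \<and> E \<subseteq> level_elems \<and> P \<in> basic_open E \<and> basic_open E \<subseteq> k"
      by (rule UN.IH[OF k])
    moreover have "k \<subseteq> \<Union>K" using k(1) by (rule Union_upper)
    ultimately show ?case by (meson order_trans)
  next
    case (Basis s)
    then consider "s = Spec" | p where "p \<in> level_elems" "s = basic_open {p}" by blast
    then show ?case
    proof cases
      case 1
      then show ?thesis using Basis.prems basic_open_empty by (intro exI[of _ "{}"]) auto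
    next
      case 2
      then show ?thesis using Basis.prems by (intro exI[of _ "{p}"]) auto
    qed
  qed simp
qed

lemma nak_spec_level_elems: "P \<in> Spec \<Longrightarrow> Sigma UNIV P \<subseteq> level_elems"
  unfolding level_elems_def
  using tambara_ideal_subgroup tambara_ideal_carrier tambara_prime_ideal[OF nak_spec_prime] by blast

definition finitely_realizable where
  "finitely_realizable E S \<longleftrightarrow> (\<forall>\<Phi>. finite \<Phi> \<longrightarrow> \<Phi> \<subseteq> S \<longrightarrow> (\<exists>P\<in>basic_open E. \<Phi> \<subseteq> Sigma UNIV P))"

definition maximal_realizable where
  "maximal_realizable E S \<longleftrightarrow>
    finitely_realizable E S \<and> (\<forall>S'. S \<subseteq> S' \<longrightarrow> finitely_realizable E S' \<longrightarrow> S' = S)"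

lemma finitely_realizableD:
  "finitely_realizable E S \<Longrightarrow> finite \<Phi> \<Longrightarrow> \<Phi> \<subseteq> S \<Longrightarrow> \<exists>P\<in>basic_open E. \<Phi> \<subseteq> Sigma UNIV P"
  unfolding finitely_realizable_def by blast

lemma maximal_realizable_exists:
  assumes X: "finitely_realizable E X"
  obtains S where "X \<subseteq> S" "maximal_realizable E S"
proof -
  define \<A> where "\<A> = {S. X \<subseteq> S \<and> finitely_realizable E S}"
  have "\<exists>S\<in>\<A>. \<forall>S'\<in>\<A>. S \<subseteq> S' \<longrightarrow> S' = S"
  proof (rule Zorn_Lemma2, rule ballI)
    fix \<C> assume \<C>: "\<C> \<in> chains \<A>"
    have "finitely_realizable E (X \<union> \<Union>\<C>)"
      unfolding finitely_realizable_def
    proof (intro allI impI)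
      fix \<Phi> assume \<Phi>: "finite \<Phi>" "\<Phi> \<subseteq> X \<union> \<Union>\<C>"
      show "\<exists>P\<in>basic_open E. \<Phi> \<subseteq> Sigma UNIV P"
      proof (cases "\<C> = {}")
        case True
        then show ?thesis using X \<Phi> unfolding finitely_realizable_def by simp
      next
        case False
        then have "\<Phi> \<subseteq> \<Union>\<C>" using \<Phi>(2) chainsD2[OF \<C>] unfolding \<A>_def by blast
        then obtain S where "S \<in> \<C>" "\<Phi> \<subseteq> S"
          using finite_subset_Union_chain[OF \<Phi>(1) _ False] \<C> unfolding chains_alt_def by blast
        then show ?thesis using \<Phi>(1) chainsD2[OF \<C>] unfolding \<A>_def finitely_realizable_def by blast
      qed
    qed
    then show "\<exists>U\<in>\<A>. \<forall>S\<in>\<C>. S \<subseteq> U" unfolding \<A>_def by (intro bexI[of _ "X \<union> \<Union>\<C>"]) auto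
  qed
  then obtain S where S: "X \<subseteq> S" "finitely_realizable E S"
    and max: "\<And>S'. S \<subseteq> S' \<Longrightarrow> X \<subseteq> S' \<Longrightarrow> finitely_realizable E S' \<Longrightarrow> S' = S"
    unfolding \<A>_def by auto
  show ?thesis
    by (rule that[OF S(1)]) (use S max in \<open>auto simp: maximal_realizable_def\<close>)
qed

context
  fixes E S assumes S: "maximal_realizable E S"
begin

lemma maximal_realizable_finitely: "finitely_realizable E S"
  using S unfolding maximal_realizable_def by blast

lemma maximal_realizable_mem_iff: "q \<in> S \<longleftrightarrow> finitely_realizable E (insert q S)"
proof
  assume "q \<in> S"
  then show "finitely_realizable E (insert q S)" using S unfolding maximal_realizable_def by (simp add: insert_absorb)
next
  assume "finitely_realizable E (insert q S)"
  then have "insert q S = S" using S subset_insertI[of S q] unfolding maximal_realizable_def by blast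
  then show "q \<in> S" by blast
qed

lemma maximal_realizable_memI:
  assumes \<Psi>: "finite \<Psi>" "\<Psi> \<subseteq> S"
    and q: "\<And>P. P \<in> basic_open E \<Longrightarrow> \<Psi> \<subseteq> Sigma UNIV P \<Longrightarrow> q \<in> Sigma UNIV P"
  shows "q \<in> S"
  unfolding maximal_realizable_mem_iff finitely_realizable_def
proof (intro allI impI)
  fix \<Phi> assume \<Phi>: "finite \<Phi>" "\<Phi> \<subseteq> insert q S"
  then have "finite (\<Phi> - {q} \<union> \<Psi>)" "\<Phi> - {q} \<union> \<Psi> \<subseteq> S" using \<Psi> by auto
  from finitely_realizableD[OF maximal_realizable_finitely this]
  obtain P where P: "P \<in> basic_open E" "\<Phi> - {q} \<union> \<Psi> \<subseteq> Sigma UNIV P" ..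
  then have "q \<in> Sigma UNIV P" using q by blast
  then have "\<Phi> \<subseteq> Sigma UNIV P" using P(2) by blast
  then show "\<exists>P\<in>basic_open E. \<Phi> \<subseteq> Sigma UNIV P" using P(1) by blast
qed

lemma maximal_realizable_not_memD:
  assumes q: "q \<notin> S"
  obtains \<Phi> where "finite \<Phi>" "\<Phi> \<subseteq> S" "\<And>P. P \<in> basic_open E \<Longrightarrow> \<Phi> \<subseteq> Sigma UNIV P \<Longrightarrow> q \<notin> Sigma UNIV P"
proof -
  obtain \<Phi> where \<Phi>: "finite \<Phi>" "\<Phi> \<subseteq> insert q S" "\<forall>P\<in>basic_open E. \<not> \<Phi> \<subseteq> Sigma UNIV P"
    using q unfolding maximal_realizable_mem_iff finitely_realizable_def by blast
  show ?thesis by (rule that[of "\<Phi> - {q}"]) (use \<Phi> in auto)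
qed

lemma maximal_realizable_realized:
  assumes p: "p \<in> S"
  obtains P where "P \<in> basic_open E" "p \<in> Sigma UNIV P"
  using finitely_realizableD[OF maximal_realizable_finitely, of "{p}"] p that by blast

lemma maximal_realizable_subset_level_elems: "S \<subseteq> level_elems"
proof
  fix p assume "p \<in> S"
  then obtain P where "P \<in> basic_open E" "p \<in> Sigma UNIV P" by (rule maximal_realizable_realized)
  then show "p \<in> level_elems" using nak_spec_level_elems basic_open_subset by blast
qed

lemma maximal_realizable_closed:
  assumes "finite \<Psi>" "\<Psi> \<subseteq> S"
    and "\<And>P. tambara_ideal G T P \<Longrightarrow> \<Psi> \<subseteq> Sigma UNIV P \<Longrightarrow> y \<in> P L"
  shows "y \<in> S `` {L}"
proof -
  have "(L, y) \<in> Sigma UNIV P" if "P \<in> basic_open E" "\<Psi> \<subseteq> Sigma UNIV P" for P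
    using assms(3)[OF tambara_prime_ideal[OF nak_spec_prime] that(2)] that(1) basic_open_subset by blast
  then show ?thesis using maximal_realizable_memI[OF assms(1,2)] by blast
qed

lemma maximal_realizable_tambara_ideal: "tambara_ideal G T (\<lambda>L. S `` {L})"
proof (rule tambara_idealI)
  have S_level: "x \<in> S `` {H} \<Longrightarrow> sg H \<and> x \<in> carrier (R H)" for H x
    using maximal_realizable_subset_level_elems unfolding level_elems_def by blast
  then show "S `` {H} = {}" if "\<not> sg H" for H using that by blast
  show "ideal (S `` {H}) (R H)" if H: "sg H" for H
  proof (rule cring.idealI_comm[OF cring_lev[OF H]])
    show "S `` {H} \<subseteq> carrier (R H)" using S_level by blast
    show "\<zero>\<^bsub>R H\<^esub> \<in> S `` {H}"
      by (rule maximal_realizable_closed[of "{}"]) (auto intro: tambara_ideal_zero[OF _ H])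
    show "x \<oplus>\<^bsub>R H\<^esub> y \<in> S `` {H}" if "x \<in> S `` {H}" "y \<in> S `` {H}" for x y
      by (rule maximal_realizable_closed[of "{(H, x), (H, y)}"]) (use that in \<open>auto intro: tambara_ideal_add\<close>)
    show "c \<otimes>\<^bsub>R H\<^esub> x \<in> S `` {H}" if "x \<in> S `` {H}" "c \<in> carrier (R H)" for x c
      by (rule maximal_realizable_closed[of "{(H, x)}"]) (use that in \<open>auto intro: tambara_ideal_mult\<close>)
  qed
  show "res T K H x \<in> S `` {K}" if "sg H" "sg K" "K \<subseteq> H" "x \<in> S `` {H}" for H K x
    by (rule maximal_realizable_closed[of "{(H, x)}"]) (use that in \<open>auto intro: tambara_ideal_res\<close>)
  show "tr T K H x \<in> S `` {H}" if "sg H" "sg K" "K \<subseteq> H" "x \<in> S `` {K}" for H K x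
    by (rule maximal_realizable_closed[of "{(K, x)}"]) (use that in \<open>auto intro: tambara_ideal_tr\<close>)
  show "nm T K H x \<in> S `` {H}" if "sg H" "sg K" "K \<subseteq> H" "x \<in> S `` {K}" for H K x
    by (rule maximal_realizable_closed[of "{(K, x)}"]) (use that in \<open>auto intro: tambara_ideal_nm\<close>)
  show "cj T g K x \<in> S `` {conjg G g K}" if "g \<in> carrier G" "sg K" "x \<in> S `` {K}" for g K x
    by (rule maximal_realizable_closed[of "{(K, x)}"]) (use that in \<open>auto intro: tambara_ideal_cj\<close>)
qed

text \<open>Primality is where the finite generation of products of principal Tambara ideals enters.\<close>
lemma maximal_realizable_prime: "tambara_prime G T (\<lambda>L. S `` {L})"
proof (rule tambara_primeI[OF maximal_realizable_tambara_ideal])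
  show "\<one>\<^bsub>R (carrier G)\<^esub> \<notin> S `` {carrier G}"
  proof
    assume "\<one>\<^bsub>R (carrier G)\<^esub> \<in> S `` {carrier G}"
    then obtain P where "P \<in> basic_open E" "\<one>\<^bsub>R (carrier G)\<^esub> \<in> P (carrier G)"
      using maximal_realizable_realized by blast
    then show False using tambara_prime_one nak_spec_prime basic_open_subset by blast
  qed
next
  fix I J H K x y
  assume I: "tambara_ideal G T I" and J: "tambara_ideal G T J"
    and IJ: "tambara_sub (tambara_prod G T I J) (\<lambda>L. S `` {L})" and x: "x \<in> I H" and y: "y \<in> J K"
  obtain F where F: "finite F" "F \<subseteq> Sigma UNIV (tambara_prod G T I J)"
    and F_prime: "\<And>P. tambara_prime G T P \<Longrightarrow> F \<subseteq> Sigma UNIV P \<Longrightarrow> x \<in> P H \<or> y \<in> P K"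
    using prime_product_witness[OF tambara_ideal_subgroup[OF I x] tambara_ideal_carrier[OF I x]
        tambara_ideal_subgroup[OF J y] tambara_ideal_carrier[OF J y]] I J x y by metis
  have FS: "F \<subseteq> S" using F(2) IJ unfolding tambara_sub_def by auto
  show "x \<in> S `` {H} \<or> y \<in> S `` {K}"
  proof (rule ccontr)
    assume "\<not> (x \<in> S `` {H} \<or> y \<in> S `` {K})"
    then have "(H, x) \<notin> S" "(K, y) \<notin> S" by auto
    then obtain \<Phi>1 \<Phi>2 where \<Phi>: "finite \<Phi>1" "\<Phi>1 \<subseteq> S" "finite \<Phi>2" "\<Phi>2 \<subseteq> S"
      and \<Phi>1: "\<And>P. P \<in> basic_open E \<Longrightarrow> \<Phi>1 \<subseteq> Sigma UNIV P \<Longrightarrow> x \<notin> P H"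
      and \<Phi>2: "\<And>P. P \<in> basic_open E \<Longrightarrow> \<Phi>2 \<subseteq> Sigma UNIV P \<Longrightarrow> y \<notin> P K"
      by (metis maximal_realizable_not_memD mem_Sigma_iff UNIV_I)
    from finitely_realizableD[OF maximal_realizable_finitely, of "\<Phi>1 \<union> \<Phi>2 \<union> F"]
    obtain P where "P \<in> basic_open E" "\<Phi>1 \<union> \<Phi>2 \<union> F \<subseteq> Sigma UNIV P" using \<Phi> F(1) FS by auto
    then show False
      using \<Phi>1 \<Phi>2 F_prime[OF nak_spec_prime] basic_open_subset by blast
  qed
qed

lemma maximal_realizable_basic_open: "(\<lambda>L. S `` {L}) \<in> basic_open E"
proof -
  have "Sigma UNIV (\<lambda>L. S `` {L}) \<inter> E = {}"
  proof (intro equals0I)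
    fix p assume p: "p \<in> Sigma UNIV (\<lambda>L. S `` {L}) \<inter> E"
    then obtain P where "P \<in> basic_open E" "p \<in> Sigma UNIV P"
      using maximal_realizable_realized by auto
    then show False using p unfolding basic_open_def by blast
  qed
  then show ?thesis
    unfolding basic_open_def nak_spec_def using maximal_realizable_prime by simp
qed

end

lemma finitely_realizable_realized:
  assumes "finitely_realizable E X"
  obtains P where "P \<in> basic_open E" "X \<subseteq> Sigma UNIV P"
proof -
  obtain S where "X \<subseteq> S" "maximal_realizable E S" using maximal_realizable_exists[OF assms] .
  moreover have "Sigma UNIV (\<lambda>L. S `` {L}) = S" by auto
  ultimately show ?thesis using that[OF maximal_realizable_basic_open] by auto
qed

lemma basic_open_subbasic_cover:
  assumes cover: "basic_open E \<subseteq> (\<Union>p\<in>X. basic_open {p})"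
  shows "\<exists>\<Phi>. finite \<Phi> \<and> \<Phi> \<subseteq> X \<and> basic_open E \<subseteq> (\<Union>p\<in>\<Phi>. basic_open {p})"
proof (rule ccontr)
  assume no_subcover: "\<not> ?thesis"
  have "\<exists>P\<in>basic_open E. \<Phi> \<subseteq> Sigma UNIV P" if \<Phi>: "finite \<Phi>" "\<Phi> \<subseteq> X" for \<Phi>
  proof -
    obtain P where P: "P \<in> basic_open E" "P \<notin> (\<Union>p\<in>\<Phi>. basic_open {p})" using no_subcover \<Phi> by blast
    then have "\<Phi> \<subseteq> Sigma UNIV P" using basic_open_subset unfolding basic_open_def by blast
    then show ?thesis using P(1) by blast
  qed
  then obtain P where P: "P \<in> basic_open E" "X \<subseteq> Sigma UNIV P"
    using finitely_realizable_realized unfolding finitely_realizable_def by blast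
  then obtain p where "p \<in> X" "P \<in> basic_open {p}" using cover by blast
  then show False using P(2) unfolding basic_open_def by blast
qed

lemma compactin_basic_open: "compactin Nak (basic_open E)"
proof -
  let ?\<B> = "insert Spec ((\<lambda>p. basic_open {p}) ` level_elems)"
  have "compact_space (subtopology Nak (basic_open E))"
  proof (rule Alexander_subbase_alt[of _ ?\<B>])
    show "basic_open E \<subseteq> \<Union>?\<B>" using basic_open_subset by blast
    show "topology (arbitrary union_of (finite intersection_of (\<lambda>x. x \<in> ?\<B>) relative_to basic_open E)) =
        subtopology Nak (basic_open E)"
      unfolding nak_topology_eq by (rule subtopology_topology_generated_by) (use basic_open_subset in blast)
  next
    fix \<C> assume \<C>: "\<C> \<subseteq> ?\<B>" and cover: "basic_open E \<subseteq> \<Union>\<C>"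
    show "\<exists>\<C>'. finite \<C>' \<and> \<C>' \<subseteq> \<C> \<and> basic_open E \<subseteq> \<Union>\<C>'"
    proof (cases "Spec \<in> \<C>")
      case True
      then show ?thesis using basic_open_subset by (intro exI[of _ "{Spec}"]) auto
    next
      case False
      have "basic_open E \<subseteq> (\<Union>p\<in>{p. basic_open {p} \<in> \<C>}. basic_open {p})"
      proof
        fix P assume "P \<in> basic_open E"
        then obtain c where c: "c \<in> \<C>" "P \<in> c" using cover by blast
        then obtain p where "c = basic_open {p}" using \<C> False by blast
        then show "P \<in> (\<Union>p\<in>{p. basic_open {p} \<in> \<C>}. basic_open {p})" using c by blast
      qed
      from basic_open_subbasic_cover[OF this] obtain \<Phi> where
        "finite \<Phi>" "\<Phi> \<subseteq> {p. basic_open {p} \<in> \<C>}" "basic_open E \<subseteq> (\<Union>p\<in>\<Phi>. basic_open {p})"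
        by (elim exE conjE)
      then show ?thesis by (intro exI[of _ "(\<lambda>p. basic_open {p}) ` \<Phi>"]) auto
    qed
  qed
  then show ?thesis unfolding compactin_subspace topspace_nak using basic_open_subset by simp
qed

lemma closedin_nak_V: "(H, x) \<in> level_elems \<Longrightarrow> closedin Nak (nak_V G T H x)"
  unfolding closedin_def topspace_nak basic_open_singleton[symmetric]
  by (auto simp: openin_basic_open nak_V_def)

lemma closure_of_singleton:
  assumes P: "P \<in> Spec"
  shows "Nak closure_of {P} = {Q \<in> Spec. \<forall>L. P L \<subseteq> Q L}"
proof (intro equalityI subsetI)
  fix Q assume Q: "Q \<in> Nak closure_of {P}"
  then have QS: "Q \<in> Spec" and cl: "\<And>W. Q \<in> W \<Longrightarrow> openin Nak W \<Longrightarrow> P \<in> W"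
    unfolding closure_of_def topspace_nak by auto
  have "y \<in> Q L" if y: "y \<in> P L" for L y
  proof (rule ccontr)
    assume "y \<notin> Q L"
    then have "Q \<in> basic_open {(L, y)}" using QS unfolding basic_open_def by simp
    moreover have "(L, y) \<in> level_elems" using nak_spec_level_elems[OF P] y by blast
    ultimately have "P \<in> basic_open {(L, y)}" using cl openin_basic_open by simp
    then show False using y unfolding basic_open_def by simp
  qed
  then show "Q \<in> {Q \<in> Spec. \<forall>L. P L \<subseteq> Q L}" using QS by blast
next
  fix Q assume Q: "Q \<in> {Q \<in> Spec. \<forall>L. P L \<subseteq> Q L}"
  have "P \<in> W" if W: "Q \<in> W" "openin Nak W" for W
  proof -
    obtain E where "basic_open E \<subseteq> W" "Q \<in> basic_open E" using nak_open_basis[OF W(2,1)] by blast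
    moreover have "Sigma UNIV P \<subseteq> Sigma UNIV Q" using Q by blast
    ultimately show ?thesis using P unfolding basic_open_def by blast
  qed
  then show "Q \<in> Nak closure_of {P}" unfolding closure_of_def topspace_nak using Q by blast
qed

context
  fixes Z assumes Z: "irreducible_closed Nak Z"
begin

lemma irreducible_subset_spec: "Z \<subseteq> Spec" and irreducible_nonempty: "Z \<noteq> {}"
  using Z closedin_subset topspace_nak unfolding irreducible_closed_def by auto

lemma irreducible_Inter_tambara_ideal: "tambara_ideal G T (\<lambda>L. \<Inter>Q\<in>Z. Q L)"
  using tambara_ideal_Inter[OF irreducible_nonempty] irreducible_subset_spec
    tambara_prime_ideal[OF nak_spec_prime] by blast

lemma irreducible_Inter_prime: "tambara_prime G T (\<lambda>L. \<Inter>Q\<in>Z. Q L)"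
proof (rule tambara_primeI[OF irreducible_Inter_tambara_ideal])
  show "\<one>\<^bsub>R (carrier G)\<^esub> \<notin> (\<Inter>Q\<in>Z. Q (carrier G))"
    using irreducible_nonempty irreducible_subset_spec tambara_prime_one[OF nak_spec_prime] by blast
next
  fix I J H K x y
  assume I: "tambara_ideal G T I" and J: "tambara_ideal G T J"
    and IJ: "tambara_sub (tambara_prod G T I J) (\<lambda>L. \<Inter>Q\<in>Z. Q L)" and x: "x \<in> I H" and y: "y \<in> J K"
  have "Z \<subseteq> nak_V G T H x \<union> nak_V G T K y"
  proof
    fix Q assume Q: "Q \<in> Z"
    then have "tambara_sub I Q \<or> tambara_sub J Q"
      using tambara_primeD[OF nak_spec_prime I J] IJ irreducible_subset_spec unfolding tambara_sub_def by blast
    then show "Q \<in> nak_V G T H x \<union> nak_V G T K y"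
      using Q x y irreducible_subset_spec unfolding tambara_sub_def nak_V_def by blast
  qed
  moreover have "(H, x) \<in> level_elems" "(K, y) \<in> level_elems"
    using tambara_ideal_subgroup tambara_ideal_carrier I J x y unfolding level_elems_def by auto
  ultimately have "Z \<subseteq> nak_V G T H x \<or> Z \<subseteq> nak_V G T K y"
    using Z closedin_nak_V unfolding irreducible_closed_def by blast
  then show "x \<in> (\<Inter>Q\<in>Z. Q H) \<or> y \<in> (\<Inter>Q\<in>Z. Q K)" unfolding nak_V_def by blast
qed

lemma irreducible_Inter_mem: "(\<lambda>L. \<Inter>Q\<in>Z. Q L) \<in> Z"
proof (rule ccontr)
  let ?P = "\<lambda>L. \<Inter>Q\<in>Z. Q L"
  assume "?P \<notin> Z"
  moreover have "?P \<in> Spec" unfolding nak_spec_def using irreducible_Inter_prime by simp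
  moreover have "openin Nak (Spec - Z)"
    using Z unfolding irreducible_closed_def closedin_def topspace_nak by blast
  ultimately obtain E where E: "finite E" "E \<subseteq> level_elems" "?P \<in> basic_open E" "basic_open E \<subseteq> Spec - Z"
    using nak_open_basis[of "Spec - Z" ?P] by blast
  have "Z \<subseteq> \<Union>((\<lambda>(H, x). nak_V G T H x) ` E)"
  proof
    fix Q assume "Q \<in> Z"
    then have "Q \<notin> basic_open E" "Q \<in> Spec" using E(4) irreducible_subset_spec by auto
    then show "Q \<in> \<Union>((\<lambda>(H, x). nak_V G T H x) ` E)" unfolding basic_open_def nak_V_def by auto
  qed
  then have "\<exists>C\<in>(\<lambda>(H, x). nak_V G T H x) ` E. Z \<subseteq> C"
    by (rule irreducible_closed_subset_Union[OF Z, rotated 2]) (use E(1,2) closedin_nak_V in auto)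
  then obtain H x where "(H, x) \<in> E" "Z \<subseteq> nak_V G T H x" by auto
  then show False using E(3) unfolding basic_open_def nak_V_def by auto
qed

end

lemma sober_nak: "sober_space Nak"
  unfolding sober_space_def
proof (intro allI impI)
  fix Z assume Z: "irreducible_closed Nak Z"
  let ?P = "\<lambda>L. \<Inter>Q\<in>Z. Q L"
  have P0: "?P \<in> Z" "?P \<in> Spec" using irreducible_Inter_mem[OF Z] irreducible_subset_spec[OF Z] by auto
  have closure: "Nak closure_of {?P} = Z"
  proof
    show "Nak closure_of {?P} \<subseteq> Z"
      using Z P0(1) unfolding irreducible_closed_def by (intro closure_of_minimal) auto
    show "Z \<subseteq> Nak closure_of {?P}"
      unfolding closure_of_singleton[OF P0(2)] using irreducible_subset_spec[OF Z] by blast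
  qed
  show "\<exists>!P. P \<in> topspace Nak \<and> Nak closure_of {P} = Z"
  proof (rule ex1I[of _ ?P])
    show "?P \<in> topspace Nak \<and> Nak closure_of {?P} = Z"
      using closure irreducible_Inter_mem[OF Z] irreducible_subset_spec[OF Z] topspace_nak by auto
  next
    fix P assume P: "P \<in> topspace Nak \<and> Nak closure_of {P} = Z"
    then have "P \<in> Spec" "P \<in> Z" using topspace_nak closure_of_subset[of "{P}" Nak] by auto
    moreover have "?P \<in> Nak closure_of {P}" using P P0(1) by simp
    ultimately have "\<forall>L. P L \<subseteq> ?P L" "\<forall>L. ?P L \<subseteq> P L"
      unfolding closure_of_singleton[OF \<open>P \<in> Spec\<close>] by blast+
    then show "P = ?P" by (intro ext) blast
  qed
qed

lemma compact_open_finite_basic_Union: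
  assumes U: "openin Nak U" and C: "compactin Nak U"
  obtains \<E> where "finite \<E>" "\<And>E. E \<in> \<E> \<Longrightarrow> finite E \<and> E \<subseteq> level_elems" "U = \<Union>(basic_open ` \<E>)"
proof -
  let ?\<E> = "{E. finite E \<and> E \<subseteq> level_elems \<and> basic_open E \<subseteq> U}"
  have cover: "U \<subseteq> \<Union>(basic_open ` ?\<E>)"
  proof
    fix P assume "P \<in> U"
    then obtain E where "finite E" "E \<subseteq> level_elems" "P \<in> basic_open E" "basic_open E \<subseteq> U"
      using nak_open_basis[OF U] by blast
    then show "P \<in> \<Union>(basic_open ` ?\<E>)" by blast
  qed
  have "\<forall>V\<in>basic_open ` ?\<E>. openin Nak V" using openin_basic_open by blast
  moreover have "(\<forall>V\<in>\<U>. openin Nak V) \<and> U \<subseteq> \<Union>\<U> \<longrightarrow> (\<exists>\<F>. finite \<F> \<and> \<F> \<subseteq> \<U> \<and> U \<subseteq> \<Union>\<F>)" for \<U>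
    using C unfolding compactin_def by blast
  ultimately have "\<exists>\<F>. finite \<F> \<and> \<F> \<subseteq> basic_open ` ?\<E> \<and> U \<subseteq> \<Union>\<F>" using cover by blast
  then obtain \<F> where \<F>: "finite \<F>" "\<F> \<subseteq> basic_open ` ?\<E>" "U \<subseteq> \<Union>\<F>" by (elim exE conjE)
  from finite_subset_image[OF \<F>(1,2)]
  obtain \<E> where \<E>: "\<E> \<subseteq> ?\<E>" "finite \<E>" "\<F> = basic_open ` \<E>" by (elim exE conjE)
  show ?thesis
  proof (rule that[OF \<E>(2)])
    show "finite E \<and> E \<subseteq> level_elems" if "E \<in> \<E>" for E using that \<E>(1) by blast
    show "U = \<Union>(basic_open ` \<E>)" using \<F>(3) \<E>(1,3) by blast
  qed
qed

theorem spectral_nak: "spectral_space Nak"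
  unfolding spectral_space_def
proof (intro conjI allI impI)
  show "compact_space Nak" unfolding compact_space_def topspace_nak
    using compactin_basic_open[of "{}"] by (simp add: basic_open_empty)
  show "sober_space Nak" by (rule sober_nak)
next
  fix U V assume "openin Nak U" "compactin Nak U" "openin Nak V" "compactin Nak V"
  then obtain \<E>1 \<E>2 where "finite \<E>1" "U = \<Union>(basic_open ` \<E>1)" "finite \<E>2" "V = \<Union>(basic_open ` \<E>2)"
    by (metis compact_open_finite_basic_Union)
  then have "U \<inter> V = (\<Union>(E1, E2)\<in>\<E>1 \<times> \<E>2. basic_open (E1 \<union> E2))" "finite (\<E>1 \<times> \<E>2)"
    by (auto simp: basic_open_Un)
  then show "compactin Nak (U \<inter> V)" by (auto intro!: compactin_Union compactin_basic_open)
next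
  fix W P assume "openin Nak W" "P \<in> W"
  from nak_open_basis[OF this]
  obtain E where "finite E" "E \<subseteq> level_elems" "P \<in> basic_open E" "basic_open E \<subseteq> W" by (elim exE conjE)
  then show "\<exists>U. openin Nak U \<and> compactin Nak U \<and> P \<in> U \<and> U \<subseteq> W"
    by (intro exI[of _ "basic_open E"]) (simp add: openin_basic_open compactin_basic_open)
qed

end

theorem theorem6p5:
  fixes G :: "('g, 'b) monoid_scheme" and T :: "('g, 'r) tambara_data"
  assumes "group G" and "finite (carrier G)" and "tambara_functor G T"
  shows "spectral_space (nak_topology G T)"
proof -
  interpret finite_tambara G T by (rule finite_tambara.intro[OF assms])
  show ?thesis by (rule spectral_nak)
qed

end
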